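(* Let $\mathscr H_\kappa$ be a functional Hilbert space with property (A). Suppose $\mathscr H_\kappa$ is an algebra under pointwise product and the spectrum of the operator $M_z$ of multiplication by $z$ on $\mathscr H_\kappa$ equals $\overline{\mathbb D}$. Then every function in $\mathscr H_\kappa$ extends continuously to $\overline{\mathbb D}$ (i.e. $\mathscr H_\kappa\subseteq C(\overline{\mathbb D})$), and every closed $M_z$-invariant subspace of $\mathscr H_\kappa$ is an ideal. Furthermore, for $f\in\mathscr H_\kappa$ the following are equivalent: (a) $f$ is cyclic, i.e. the smallest closed $M_z$-invariant subspace containing $f$ is $\mathscr H_\kappa$; (b) $f$ is invertible in $\mathrm{Mult}(\mathscr H_\kappa)$; (c) (the continuous extension of) $f$ has no zero in $\overline{\mathbb D}$.
   Context: A functional Hilbert space with property (A) is a reproducing kernel Hilbert space $\mathscr H_\kappa$ of holomorphic functions on the open unit disc $\mathbb D$ with sesqui-analytic reproducing kernel $\kappa$ such that: (A1) $\kappa(w,0)=1$ for all $w\in\mathbb D$; (A2) $zf\in\mathscr H_\kappa$ for every $f\in\mathscr H_\kappa$; (A3) the polynomials are dense in $\mathscr H_\kappa$. $\mathrm{Mult}(\mathscr H_\kappa)=\{\varphi:\varphi f\in\mathscr H_\kappa\ \forall f\in\mathscr H_\kappa\}$, a Banach algebra with the operator norm of $f\mapsto\varphi f$. *)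

theory Defs
  imports "HOL-Complex_Analysis.Complex_Analysis"
begin

text \<open>Elements of a functional Hilbert space on the unit disc are represented as
functions complex => complex that vanish outside the open unit disc
(only their values on the disc are meaningful).\<close>

definition disc :: "complex set" where "disc = ball 0 1"

definition dres :: "(complex \<Rightarrow> complex) \<Rightarrow> complex \<Rightarrow> complex" where
  "dres f = (\<lambda>z. if z \<in> disc then f z else 0)"

definition hnorm :: "((complex \<Rightarrow> complex) \<Rightarrow> (complex \<Rightarrow> complex) \<Rightarrow> complex)
    \<Rightarrow> (complex \<Rightarrow> complex) \<Rightarrow> real" where
  "hnorm ip f = sqrt (Re (ip f f))"

definition hdiff :: "(complex \<Rightarrow> complex) \<Rightarrow> (complex \<Rightarrow> complex) \<Rightarrow> complex \<Rightarrow> complex" where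
  "hdiff f g = (\<lambda>z. f z - g z)"

definition fun_hilbert :: "(complex \<Rightarrow> complex) set
    \<Rightarrow> ((complex \<Rightarrow> complex) \<Rightarrow> (complex \<Rightarrow> complex) \<Rightarrow> complex) \<Rightarrow> bool" where
  "fun_hilbert H ip \<longleftrightarrow>
     (\<forall>f\<in>H. \<forall>z. z \<notin> disc \<longrightarrow> f z = 0) \<and>
     (\<lambda>_. 0) \<in> H \<and>
     (\<forall>f\<in>H. \<forall>g\<in>H. (\<lambda>z. f z + g z) \<in> H) \<and>
     (\<forall>f\<in>H. \<forall>c. (\<lambda>z. c * f z) \<in> H) \<and>
     (\<forall>f\<in>H. \<forall>g\<in>H. \<forall>h\<in>H. ip (\<lambda>z. f z + g z) h = ip f h + ip g h) \<and>
     (\<forall>f\<in>H. \<forall>g\<in>H. \<forall>c. ip (\<lambda>z. c * f z) g = c * ip f g) \<and>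
     (\<forall>f\<in>H. \<forall>g\<in>H. ip g f = cnj (ip f g)) \<and>
     (\<forall>f\<in>H. Re (ip f f) \<ge> 0) \<and>
     (\<forall>f\<in>H. ip f f = 0 \<longrightarrow> f = (\<lambda>_. 0)) \<and>
     (\<forall>s. (\<forall>n. s n \<in> H) \<and>
          (\<forall>e>0. \<exists>N. \<forall>m\<ge>N. \<forall>n\<ge>N. hnorm ip (hdiff (s m) (s n)) < e)
        \<longrightarrow> (\<exists>f\<in>H. (\<lambda>n. hnorm ip (hdiff (s n) f)) \<longlonglongrightarrow> 0))"

text \<open>Reproducing kernel: RK H ip w is the kernel function at w (f w = <f, k_w>),
and kernel H ip z w = kappa(z,w) = k_w(z).\<close>
definition RK :: "(complex \<Rightarrow> complex) set
    \<Rightarrow> ((complex \<Rightarrow> complex) \<Rightarrow> (complex \<Rightarrow> complex) \<Rightarrow> complex) \<Rightarrow> complex \<Rightarrow> complex \<Rightarrow> complex" where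
  "RK H ip w = (THE k. k \<in> H \<and> (\<forall>f\<in>H. f w = ip f k))"

definition kernel :: "(complex \<Rightarrow> complex) set
    \<Rightarrow> ((complex \<Rightarrow> complex) \<Rightarrow> (complex \<Rightarrow> complex) \<Rightarrow> complex) \<Rightarrow> complex \<Rightarrow> complex \<Rightarrow> complex" where
  "kernel H ip z w = RK H ip w z"

definition rkhs_disc :: "(complex \<Rightarrow> complex) set
    \<Rightarrow> ((complex \<Rightarrow> complex) \<Rightarrow> (complex \<Rightarrow> complex) \<Rightarrow> complex) \<Rightarrow> bool" where
  "rkhs_disc H ip \<longleftrightarrow> fun_hilbert H ip \<and>
     (\<forall>f\<in>H. f holomorphic_on disc) \<and>
     (\<forall>w\<in>disc. \<exists>k\<in>H. \<forall>f\<in>H. f w = ip f k)"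

definition Mz :: "(complex \<Rightarrow> complex) \<Rightarrow> complex \<Rightarrow> complex" where
  "Mz f = (\<lambda>z. z * f z)"

definition property_A :: "(complex \<Rightarrow> complex) set
    \<Rightarrow> ((complex \<Rightarrow> complex) \<Rightarrow> (complex \<Rightarrow> complex) \<Rightarrow> complex) \<Rightarrow> bool" where
  "property_A H ip \<longleftrightarrow> rkhs_disc H ip \<and>
     (\<forall>w\<in>disc. kernel H ip w 0 = 1) \<and>
     (\<forall>f\<in>H. Mz f \<in> H) \<and>
     (\<forall>f\<in>H. \<forall>e>0. \<exists>p. dres (poly p) \<in> H \<and> hnorm ip (hdiff f (dres (poly p))) < e)"

definition bounded_op_on :: "(complex \<Rightarrow> complex) set
    \<Rightarrow> ((complex \<Rightarrow> complex) \<Rightarrow> (complex \<Rightarrow> complex) \<Rightarrow> complex)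
    \<Rightarrow> ((complex \<Rightarrow> complex) \<Rightarrow> (complex \<Rightarrow> complex)) \<Rightarrow> bool" where
  "bounded_op_on H ip T \<longleftrightarrow>
     (\<forall>f\<in>H. T f \<in> H) \<and>
     (\<forall>f\<in>H. \<forall>g\<in>H. T (\<lambda>z. f z + g z) = (\<lambda>z. T f z + T g z)) \<and>
     (\<forall>f\<in>H. \<forall>c. T (\<lambda>z. c * f z) = (\<lambda>z. c * T f z)) \<and>
     (\<exists>C. \<forall>f\<in>H. hnorm ip (T f) \<le> C * hnorm ip f)"

definition spectrum_op :: "(complex \<Rightarrow> complex) set
    \<Rightarrow> ((complex \<Rightarrow> complex) \<Rightarrow> (complex \<Rightarrow> complex) \<Rightarrow> complex)
    \<Rightarrow> ((complex \<Rightarrow> complex) \<Rightarrow> (complex \<Rightarrow> complex)) \<Rightarrow> complex set" where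
  "spectrum_op H ip T = {c. \<not> (\<exists>S. bounded_op_on H ip S \<and>
       (\<forall>f\<in>H. S (\<lambda>z. T f z - c * f z) = f) \<and>
       (\<forall>f\<in>H. (\<lambda>z. T (S f) z - c * S f z) = f))}"

definition closed_inv_subspace :: "(complex \<Rightarrow> complex) set
    \<Rightarrow> ((complex \<Rightarrow> complex) \<Rightarrow> (complex \<Rightarrow> complex) \<Rightarrow> complex) \<Rightarrow> (complex \<Rightarrow> complex) set \<Rightarrow> bool" where
  "closed_inv_subspace H ip M \<longleftrightarrow> M \<subseteq> H \<and>
     (\<lambda>_. 0) \<in> M \<and>
     (\<forall>f\<in>M. \<forall>g\<in>M. (\<lambda>z. f z + g z) \<in> M) \<and>
     (\<forall>f\<in>M. \<forall>c. (\<lambda>z. c * f z) \<in> M) \<and>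
     (\<forall>s f. (\<forall>n. s n \<in> M) \<and> f \<in> H \<and> (\<lambda>n. hnorm ip (hdiff (s n) f)) \<longlonglongrightarrow> 0 \<longrightarrow> f \<in> M) \<and>
     (\<forall>f\<in>M. Mz f \<in> M)"

definition cyclic :: "(complex \<Rightarrow> complex) set
    \<Rightarrow> ((complex \<Rightarrow> complex) \<Rightarrow> (complex \<Rightarrow> complex) \<Rightarrow> complex) \<Rightarrow> (complex \<Rightarrow> complex) \<Rightarrow> bool" where
  "cyclic H ip f \<longleftrightarrow> \<Inter>{M. closed_inv_subspace H ip M \<and> f \<in> M} = H"

definition Mult :: "(complex \<Rightarrow> complex) set \<Rightarrow> (complex \<Rightarrow> complex) set" where
  "Mult H = {\<phi>. \<forall>f\<in>H. (\<lambda>z. \<phi> z * f z) \<in> H}"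

text \<open>Invertibility in Mult(H): the unit of Mult(H) is the constant 1, and
multipliers are identified when they agree on the disc.\<close>
definition invertible_mult :: "(complex \<Rightarrow> complex) set \<Rightarrow> (complex \<Rightarrow> complex) \<Rightarrow> bool" where
  "invertible_mult H \<phi> \<longleftrightarrow> \<phi> \<in> Mult H \<and> (\<exists>\<psi>\<in>Mult H. \<forall>z\<in>disc. \<phi> z * \<psi> z = 1)"

end

theory Submission
  imports Defs
begin

locale fun_hilbert_space =
  fixes H :: "(complex \<Rightarrow> complex) set"
    and ip :: "(complex \<Rightarrow> complex) \<Rightarrow> (complex \<Rightarrow> complex) \<Rightarrow> complex"
  assumes fun_hilbert: "fun_hilbert H ip"
begin

abbreviation norm_H :: "(complex \<Rightarrow> complex) \<Rightarrow> real" ("\<parallel>_\<parallel>")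
  where "\<parallel>f\<parallel> \<equiv> hnorm ip f"

lemma vanishes_outside_disc: "f \<in> H \<Longrightarrow> z \<notin> disc \<Longrightarrow> f z = 0"
  using fun_hilbert unfolding fun_hilbert_def by blast

lemma zero_mem [simp]: "(\<lambda>_. 0) \<in> H"
  using fun_hilbert unfolding fun_hilbert_def by blast

lemma add_mem [simp]: "f \<in> H \<Longrightarrow> g \<in> H \<Longrightarrow> (\<lambda>z. f z + g z) \<in> H"
  using fun_hilbert unfolding fun_hilbert_def by blast

lemma scale_mem [simp]: "f \<in> H \<Longrightarrow> (\<lambda>z. c * f z) \<in> H"
  using fun_hilbert unfolding fun_hilbert_def by blast

lemma minus_mem [simp]: "f \<in> H \<Longrightarrow> (\<lambda>z. - f z) \<in> H"
  using scale_mem[of f "-1"] by simp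

lemma diff_mem [simp]: "f \<in> H \<Longrightarrow> g \<in> H \<Longrightarrow> (\<lambda>z. f z - g z) \<in> H"
  using add_mem[of f "\<lambda>z. - g z"] by simp

lemma ip_add_left: "f \<in> H \<Longrightarrow> g \<in> H \<Longrightarrow> h \<in> H \<Longrightarrow> ip (\<lambda>z. f z + g z) h = ip f h + ip g h"
  using fun_hilbert unfolding fun_hilbert_def by blast

lemma ip_scale_left: "f \<in> H \<Longrightarrow> g \<in> H \<Longrightarrow> ip (\<lambda>z. c * f z) g = c * ip f g"
  using fun_hilbert unfolding fun_hilbert_def by blast

lemma ip_cnj_commute: "f \<in> H \<Longrightarrow> g \<in> H \<Longrightarrow> ip g f = cnj (ip f g)"
  using fun_hilbert unfolding fun_hilbert_def by blast

lemma Re_ip_self_nonneg: "f \<in> H \<Longrightarrow> Re (ip f f) \<ge> 0"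
  using fun_hilbert unfolding fun_hilbert_def by blast

lemma ip_self_eq_0D: "f \<in> H \<Longrightarrow> ip f f = 0 \<Longrightarrow> f = (\<lambda>_. 0)"
  using fun_hilbert unfolding fun_hilbert_def by blast

lemma Cauchy_convergent:
  assumes "\<And>n. s n \<in> H"
    and "\<And>e. e > 0 \<Longrightarrow> \<exists>N. \<forall>m\<ge>N. \<forall>n\<ge>N. \<parallel>\<lambda>z. s m z - s n z\<parallel> < e"
  obtains f where "f \<in> H" "(\<lambda>n. \<parallel>\<lambda>z. s n z - f z\<parallel>) \<longlonglongrightarrow> 0"
  using assms fun_hilbert unfolding fun_hilbert_def hdiff_def by blast

lemma ip_diff_left: "f \<in> H \<Longrightarrow> g \<in> H \<Longrightarrow> h \<in> H \<Longrightarrow> ip (\<lambda>z. f z - g z) h = ip f h - ip g h"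
  using ip_add_left[of f "\<lambda>z. (-1) * g z" h] ip_scale_left[of g h "-1"] by simp

lemma ip_add_right: "f \<in> H \<Longrightarrow> g \<in> H \<Longrightarrow> h \<in> H \<Longrightarrow> ip h (\<lambda>z. f z + g z) = ip h f + ip h g"
  using ip_cnj_commute[of "\<lambda>z. f z + g z" h] ip_cnj_commute[of f h] ip_cnj_commute[of g h]
  by (simp add: ip_add_left)

lemma ip_scale_right: "f \<in> H \<Longrightarrow> g \<in> H \<Longrightarrow> ip f (\<lambda>z. c * g z) = cnj c * ip f g"
  using ip_cnj_commute[of "\<lambda>z. c * g z" f] ip_cnj_commute[of g f] by (simp add: ip_scale_left)

lemma ip_diff_right: "f \<in> H \<Longrightarrow> g \<in> H \<Longrightarrow> h \<in> H \<Longrightarrow> ip h (\<lambda>z. f z - g z) = ip h f - ip h g"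
  using ip_cnj_commute[of "\<lambda>z. f z - g z" h] ip_cnj_commute[of f h] ip_cnj_commute[of g h]
  by (simp add: ip_diff_left)

lemma ip_zero_left [simp]: "g \<in> H \<Longrightarrow> ip (\<lambda>_. 0) g = 0"
  using ip_scale_left[of "\<lambda>_. 0" g 0] by simp

lemma ip_zero_right [simp]: "g \<in> H \<Longrightarrow> ip g (\<lambda>_. 0) = 0"
  using ip_scale_right[of g "\<lambda>_. 0" 0] by simp

lemma hnorm_nonneg [simp]: "f \<in> H \<Longrightarrow> \<parallel>f\<parallel> \<ge> 0"
  unfolding hnorm_def using Re_ip_self_nonneg by simp

lemma ip_self_eq: "f \<in> H \<Longrightarrow> ip f f = of_real (\<parallel>f\<parallel>\<^sup>2)"
  using ip_cnj_commute[of f f] Re_ip_self_nonneg[of f]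
  by (simp add: hnorm_def complex_eq_iff)

lemma hnorm_eq_0_iff: "f \<in> H \<Longrightarrow> \<parallel>f\<parallel> = 0 \<longleftrightarrow> f = (\<lambda>_. 0)"
  using ip_self_eq[of f] ip_self_eq_0D[of f] by (auto simp: hnorm_def)

lemma hnorm_zero [simp]: "\<parallel>\<lambda>_. 0\<parallel> = 0"
  using hnorm_eq_0_iff by simp

lemma hnorm_pos: "f \<in> H \<Longrightarrow> f \<noteq> (\<lambda>_. 0) \<Longrightarrow> \<parallel>f\<parallel> > 0"
  using hnorm_nonneg hnorm_eq_0_iff by (metis order_less_le)

lemma hnorm_scale: "f \<in> H \<Longrightarrow> \<parallel>\<lambda>z. c * f z\<parallel> = cmod c * \<parallel>f\<parallel>"
proof -
  assume f: "f \<in> H"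
  have "ip (\<lambda>z. c * f z) (\<lambda>z. c * f z) = (c * cnj c) * ip f f"
    using f by (simp add: ip_scale_left ip_scale_right)
  also have "\<dots> = of_real ((cmod c * \<parallel>f\<parallel>)\<^sup>2)"
    using f by (simp add: complex_mult_cnj cmod_power2 ip_self_eq power_mult_distrib)
  finally show ?thesis
    using f Re_ip_self_nonneg[OF f] by (simp add: hnorm_def abs_mult)
qed

lemma hnorm_minus: "f \<in> H \<Longrightarrow> \<parallel>\<lambda>z. - f z\<parallel> = \<parallel>f\<parallel>"
  using hnorm_scale[of f "-1"] by simp

lemma hnorm_diff_commute: "f \<in> H \<Longrightarrow> g \<in> H \<Longrightarrow> \<parallel>\<lambda>z. f z - g z\<parallel> = \<parallel>\<lambda>z. g z - f z\<parallel>"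
  using hnorm_minus[of "\<lambda>z. g z - f z"] by simp

lemma hnorm_sq: "f \<in> H \<Longrightarrow> \<parallel>f\<parallel>\<^sup>2 = Re (ip f f)"
  by (simp add: ip_self_eq)

lemma hnorm_add_sq:
  "f \<in> H \<Longrightarrow> g \<in> H \<Longrightarrow> \<parallel>\<lambda>z. f z + g z\<parallel>\<^sup>2 = \<parallel>f\<parallel>\<^sup>2 + \<parallel>g\<parallel>\<^sup>2 + 2 * Re (ip f g)"
  using ip_cnj_commute[of f g] by (simp add: hnorm_sq ip_add_left ip_add_right)

lemma hnorm_diff_sq:
  "f \<in> H \<Longrightarrow> g \<in> H \<Longrightarrow> \<parallel>\<lambda>z. f z - g z\<parallel>\<^sup>2 = \<parallel>f\<parallel>\<^sup>2 + \<parallel>g\<parallel>\<^sup>2 - 2 * Re (ip f g)"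
  using ip_cnj_commute[of f g] by (simp add: hnorm_sq ip_diff_left ip_diff_right)

lemma parallelogram_law:
  "f \<in> H \<Longrightarrow> g \<in> H \<Longrightarrow> \<parallel>\<lambda>z. f z + g z\<parallel>\<^sup>2 + \<parallel>\<lambda>z. f z - g z\<parallel>\<^sup>2 = 2 * \<parallel>f\<parallel>\<^sup>2 + 2 * \<parallel>g\<parallel>\<^sup>2"
  by (simp add: hnorm_add_sq hnorm_diff_sq)

lemma hnorm_diff_projection_sq:
  assumes x: "x \<in> H" and v: "v \<in> H" and nz: "\<parallel>v\<parallel> \<noteq> 0"
  shows "\<parallel>\<lambda>z. x z - (ip x v / of_real (\<parallel>v\<parallel>\<^sup>2)) * v z\<parallel>\<^sup>2 = \<parallel>x\<parallel>\<^sup>2 - (cmod (ip x v))\<^sup>2 / \<parallel>v\<parallel>\<^sup>2"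
proof -
  define N where "N = \<parallel>v\<parallel>\<^sup>2"
  define t where "t = ip x v / of_real N"
  have N: "N > 0"
    using nz by (simp add: N_def)
  have "cnj t * ip x v = of_real ((cmod (ip x v))\<^sup>2 / N)"
    by (simp add: t_def complex_mult_cnj cmod_power2 mult.commute)
  moreover have "cmod t = cmod (ip x v) / N"
    using N by (simp add: t_def norm_divide)
  then have "\<parallel>\<lambda>z. t * v z\<parallel>\<^sup>2 = (cmod (ip x v))\<^sup>2 / N"
    unfolding hnorm_scale[OF v] using N
    by (simp add: power_mult_distrib power_divide N_def [symmetric]) (simp add: power2_eq_square)
  ultimately show ?thesis
    using x v by (simp add: hnorm_diff_sq ip_scale_right N_def [symmetric] t_def [symmetric])
qed

lemma Cauchy_Schwarz:
  assumes f: "f \<in> H" and g: "g \<in> H"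
  shows "cmod (ip f g) \<le> \<parallel>f\<parallel> * \<parallel>g\<parallel>"
proof (cases "\<parallel>g\<parallel> = 0")
  case True
  then show ?thesis using g hnorm_eq_0_iff f by simp
next
  case False
  have "(cmod (ip f g))\<^sup>2 / \<parallel>g\<parallel>\<^sup>2 \<le> \<parallel>f\<parallel>\<^sup>2"
    using hnorm_diff_projection_sq[OF f g False] zero_le_power2 by (metis diff_ge_0_iff_ge)
  then have "(cmod (ip f g))\<^sup>2 \<le> (\<parallel>f\<parallel> * \<parallel>g\<parallel>)\<^sup>2"
    using False by (simp add: divide_le_eq power_mult_distrib)
  then show ?thesis
    using f g by (simp add: power2_le_iff_abs_le)
qed

lemma hnorm_triangle: "f \<in> H \<Longrightarrow> g \<in> H \<Longrightarrow> \<parallel>\<lambda>z. f z + g z\<parallel> \<le> \<parallel>f\<parallel> + \<parallel>g\<parallel>"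
proof -
  assume f: "f \<in> H" and g: "g \<in> H"
  have "Re (ip f g) \<le> \<parallel>f\<parallel> * \<parallel>g\<parallel>"
    using complex_Re_le_cmod[of "ip f g"] Cauchy_Schwarz[OF f g] by linarith
  then have "\<parallel>\<lambda>z. f z + g z\<parallel>\<^sup>2 \<le> (\<parallel>f\<parallel> + \<parallel>g\<parallel>)\<^sup>2"
    unfolding hnorm_add_sq[OF f g] power2_sum by linarith
  then show ?thesis
    using f g by (auto intro: power2_le_imp_le)
qed

lemma hnorm_triangle_diff: "f \<in> H \<Longrightarrow> g \<in> H \<Longrightarrow> \<parallel>\<lambda>z. f z - g z\<parallel> \<le> \<parallel>f\<parallel> + \<parallel>g\<parallel>"
  using hnorm_triangle[of f "\<lambda>z. - g z"] hnorm_minus[of g] by simp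

lemma hnorm_diff_triangle:
  "f \<in> H \<Longrightarrow> g \<in> H \<Longrightarrow> h \<in> H \<Longrightarrow> \<parallel>\<lambda>z. f z - h z\<parallel> \<le> \<parallel>\<lambda>z. f z - g z\<parallel> + \<parallel>\<lambda>z. g z - h z\<parallel>"
  using hnorm_triangle[of "\<lambda>z. f z - g z" "\<lambda>z. g z - h z"] by simp


definition closed_subspace :: "(complex \<Rightarrow> complex) set \<Rightarrow> bool" where
  "closed_subspace V \<longleftrightarrow> V \<subseteq> H \<and> (\<lambda>_. 0) \<in> V \<and> (\<forall>f\<in>V. \<forall>g\<in>V. (\<lambda>z. f z + g z) \<in> V) \<and>
     (\<forall>f\<in>V. \<forall>c. (\<lambda>z. c * f z) \<in> V) \<and>
     (\<forall>s f. (\<forall>n. s n \<in> V) \<and> f \<in> H \<and> (\<lambda>n. \<parallel>\<lambda>z. s n z - f z\<parallel>) \<longlonglongrightarrow> 0 \<longrightarrow> f \<in> V)"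

lemma closed_subspaceD:
  assumes "closed_subspace V"
  shows closed_subspace_subset: "V \<subseteq> H"
    and closed_subspace_zero: "(\<lambda>_. 0) \<in> V"
    and closed_subspace_add: "\<And>f g. f \<in> V \<Longrightarrow> g \<in> V \<Longrightarrow> (\<lambda>z. f z + g z) \<in> V"
    and closed_subspace_scale: "\<And>f c. f \<in> V \<Longrightarrow> (\<lambda>z. c * f z) \<in> V"
    and closed_subspace_limit:
      "\<And>s f. (\<And>n. s n \<in> V) \<Longrightarrow> f \<in> H \<Longrightarrow> (\<lambda>n. \<parallel>\<lambda>z. s n z - f z\<parallel>) \<longlonglongrightarrow> 0 \<Longrightarrow> f \<in> V"
  using assms unfolding closed_subspace_def by blast+

lemma orthogonal_if_minimal:
  assumes x: "x \<in> H" and v: "v \<in> H" and min: "\<And>t. \<parallel>x\<parallel> \<le> \<parallel>\<lambda>z. x z - t * v z\<parallel>"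
  shows "ip x v = 0"
proof (rule ccontr)
  assume ne: "ip x v \<noteq> 0"
  then have nz: "\<parallel>v\<parallel> \<noteq> 0"
    using x v hnorm_eq_0_iff by force
  let ?t = "ip x v / of_real (\<parallel>v\<parallel>\<^sup>2)"
  have "\<parallel>x\<parallel>\<^sup>2 \<le> \<parallel>\<lambda>z. x z - ?t * v z\<parallel>\<^sup>2"
    using min[of ?t] x by (simp add: power_mono)
  also have "\<dots> = \<parallel>x\<parallel>\<^sup>2 - (cmod (ip x v))\<^sup>2 / \<parallel>v\<parallel>\<^sup>2"
    by (rule hnorm_diff_projection_sq[OF x v nz])
  finally show False
    using ne nz by (simp add: field_simps)
qed

lemma minimizing_sequence_Cauchy:
  assumes V: "closed_subspace V" and u: "u \<in> H"
    and d: "\<And>v. v \<in> V \<Longrightarrow> d \<le> \<parallel>\<lambda>z. u z - v z\<parallel>"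
    and vs: "\<And>n. vs n \<in> V" and lim: "(\<lambda>n. \<parallel>\<lambda>z. u z - vs n z\<parallel>) \<longlonglongrightarrow> d"
    and e: "e > 0"
  shows "\<exists>N. \<forall>m\<ge>N. \<forall>n\<ge>N. \<parallel>\<lambda>z. vs m z - vs n z\<parallel> < e"
proof -
  have VH: "V \<subseteq> H"
    using V by (rule closed_subspace_subset)
  have vsH: "vs n \<in> H" for n
    using vs VH by blast
  define a where "a n = \<parallel>\<lambda>z. u z - vs n z\<parallel>\<^sup>2 - d\<^sup>2" for n
  have bound: "\<parallel>\<lambda>z. vs m z - vs n z\<parallel>\<^sup>2 \<le> 2 * a m + 2 * a n" for m n
  proof -
    let ?x = "\<lambda>z. u z - vs m z" and ?y = "\<lambda>z. u z - vs n z"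
    have xy: "?x \<in> H" "?y \<in> H"
      using u vsH by auto
    define w where "w = (\<lambda>z. (1/2) * vs m z + (1/2) * vs n z)"
    have wV: "w \<in> V"
      unfolding w_def
      using closed_subspace_add[OF V closed_subspace_scale[OF V vs] closed_subspace_scale[OF V vs]] .
    have "(\<lambda>z. ?x z + ?y z) = (\<lambda>z. 2 * (u z - w z))"
      by (auto simp: w_def algebra_simps)
    then have "\<parallel>\<lambda>z. ?x z + ?y z\<parallel> = 2 * \<parallel>\<lambda>z. u z - w z\<parallel>"
      using hnorm_scale[of "\<lambda>z. u z - w z" 2] u wV VH by auto
    then have "2 * d \<le> \<parallel>\<lambda>z. ?x z + ?y z\<parallel>"
      using d[OF wV] by simp
    moreover have "0 \<le> d"
      using LIMSEQ_le_const[OF lim, of 0] u vsH by simp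
    ultimately have "(2 * d)\<^sup>2 \<le> \<parallel>\<lambda>z. ?x z + ?y z\<parallel>\<^sup>2"
      by (intro power_mono) simp_all
    moreover have "\<parallel>\<lambda>z. ?x z - ?y z\<parallel> = \<parallel>\<lambda>z. vs m z - vs n z\<parallel>"
      using hnorm_diff_commute[OF vsH vsH] by simp
    ultimately show ?thesis
      using parallelogram_law[OF xy] by (simp add: a_def power_mult_distrib)
  qed
  have "a \<longlonglongrightarrow> d\<^sup>2 - d\<^sup>2"
    unfolding a_def by (intro tendsto_intros lim)
  then have "eventually (\<lambda>n. a n < e\<^sup>2 / 4) sequentially"
    using e by (intro order_tendstoD) auto
  then obtain N where N: "\<And>n. n \<ge> N \<Longrightarrow> a n < e\<^sup>2 / 4"
    unfolding eventually_sequentially by blast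
  have "\<parallel>\<lambda>z. vs m z - vs n z\<parallel> < e" if "m \<ge> N" "n \<ge> N" for m n
  proof -
    have "\<parallel>\<lambda>z. vs m z - vs n z\<parallel>\<^sup>2 < e\<^sup>2"
      using bound[of m n] N[OF that(1)] N[OF that(2)] by linarith
    then show ?thesis
      using e by (auto intro: power_less_imp_less_base)
  qed
  then show ?thesis by blast
qed

lemma orthogonal_projection_exists:
  assumes V: "closed_subspace V" and u: "u \<in> H"
  obtains p where "p \<in> V" "\<And>v. v \<in> V \<Longrightarrow> ip (\<lambda>z. u z - p z) v = 0"
proof -
  have VH: "V \<subseteq> H"
    using V by (rule closed_subspace_subset)
  define D where "D = (\<lambda>v. \<parallel>\<lambda>z. u z - v z\<parallel>) ` V"
  define d where "d = Inf D"
  have D: "D \<noteq> {}" "bdd_below D"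
    using closed_subspace_zero[OF V] VH u unfolding D_def bdd_below_def
    by (auto intro!: exI[of _ 0])
  have d: "d \<le> \<parallel>\<lambda>z. u z - v z\<parallel>" if "v \<in> V" for v
    unfolding d_def using D that by (auto simp: D_def intro: cInf_lower)
  have "\<exists>v\<in>V. \<parallel>\<lambda>z. u z - v z\<parallel> < d + inverse (real (Suc n))" for n
    using cInf_lessD[OF D(1), of "d + inverse (real (Suc n))"] unfolding d_def D_def by auto
  then obtain vs where vs: "\<And>n. vs n \<in> V"
    and vs_less: "\<And>n. \<parallel>\<lambda>z. u z - vs n z\<parallel> < d + inverse (real (Suc n))"
    by metis
  have vsH: "vs n \<in> H" for n
    using vs VH by blast
  have lim: "(\<lambda>n. \<parallel>\<lambda>z. u z - vs n z\<parallel>) \<longlonglongrightarrow> d"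
  proof (rule tendsto_sandwich)
    show "\<forall>\<^sub>F n in sequentially. d \<le> \<parallel>\<lambda>z. u z - vs n z\<parallel>"
      using d vs by simp
    show "\<forall>\<^sub>F n in sequentially. \<parallel>\<lambda>z. u z - vs n z\<parallel> \<le> d + inverse (real (Suc n))"
      using vs_less by (auto intro: always_eventually less_imp_le)
    show "(\<lambda>n. d + inverse (real (Suc n))) \<longlonglongrightarrow> d"
      by (rule LIMSEQ_inverse_real_of_nat_add)
  qed simp
  obtain p where pH: "p \<in> H" and p_lim: "(\<lambda>n. \<parallel>\<lambda>z. vs n z - p z\<parallel>) \<longlonglongrightarrow> 0"
    using Cauchy_convergent[OF vsH minimizing_sequence_Cauchy[OF V u d vs lim]] by blast
  have pV: "p \<in> V"
    using closed_subspace_limit[OF V vs pH p_lim] .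
  have "\<parallel>\<lambda>z. u z - p z\<parallel> \<le> d"
  proof (rule LIMSEQ_le_const[OF tendsto_add[OF lim p_lim, simplified]])
    show "\<exists>N. \<forall>n\<ge>N. \<parallel>\<lambda>z. u z - p z\<parallel> \<le> \<parallel>\<lambda>z. u z - vs n z\<parallel> + \<parallel>\<lambda>z. vs n z - p z\<parallel>"
      using hnorm_diff_triangle u vsH pH by blast
  qed
  then have "ip (\<lambda>z. u z - p z) v = 0" if v: "v \<in> V" for v
  proof (intro orthogonal_if_minimal)
    fix t
    have "(\<lambda>z. p z + t * v z) \<in> V"
      using V pV v by (simp add: closed_subspace_add closed_subspace_scale)
    then show "\<parallel>\<lambda>z. u z - p z\<parallel> \<le> \<parallel>\<lambda>z. (u z - p z) - t * v z\<parallel>"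
      using d \<open>\<parallel>\<lambda>z. u z - p z\<parallel> \<le> d\<close> by (fastforce simp: algebra_simps)
  qed (use u pH v VH in auto)
  with pV that show ?thesis by blast
qed

lemma orthogonal_vector_exists:
  assumes V: "closed_subspace V" and u: "u \<in> H" and notin: "u \<notin> V"
  obtains v where "v \<in> H" "\<And>x. x \<in> V \<Longrightarrow> ip x v = 0" "ip u v \<noteq> 0"
proof -
  obtain p where pV: "p \<in> V" and orth: "\<And>x. x \<in> V \<Longrightarrow> ip (\<lambda>z. u z - p z) x = 0"
    using orthogonal_projection_exists[OF V u] by blast
  define v where "v = (\<lambda>z. u z - p z)"
  have pH: "p \<in> H" and vH: "v \<in> H"
    using pV closed_subspace_subset[OF V] u by (auto simp: v_def)
  have orth': "ip x v = 0" if "x \<in> V" for x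
    using ip_cnj_commute[of v x] orth[OF that] that closed_subspace_subset[OF V] vH
    by (auto simp: v_def)
  have "v \<noteq> (\<lambda>_. 0)"
  proof
    assume "v = (\<lambda>_. 0)"
    then have "u = p"
      by (simp add: v_def fun_eq_iff)
    with notin pV show False by simp
  qed
  then have "ip v v \<noteq> 0"
    using ip_self_eq[OF vH] hnorm_eq_0_iff[OF vH] by simp
  moreover have "ip u v = ip v v + ip p v"
    using ip_add_left[OF vH pH vH] by (simp add: v_def)
  ultimately have "ip u v \<noteq> 0"
    using orth'[OF pV] by simp
  with vH orth' that show ?thesis by blast
qed


definition hdist :: "(complex \<Rightarrow> complex) \<Rightarrow> (complex \<Rightarrow> complex) \<Rightarrow> real" where
  "hdist f g = (if f \<in> H \<and> g \<in> H then \<parallel>\<lambda>z. f z - g z\<parallel> else 0)"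

sublocale H_metric: Metric_space H hdist
proof
  fix f g h
  show "0 \<le> hdist f g"
    by (simp add: hdist_def)
  show "hdist f g = hdist g f"
    by (metis hdist_def hnorm_diff_commute)
  show "f \<in> H \<Longrightarrow> g \<in> H \<Longrightarrow> hdist f g = 0 \<longleftrightarrow> f = g"
    by (simp add: hdist_def hnorm_eq_0_iff fun_eq_iff)
  show "f \<in> H \<Longrightarrow> g \<in> H \<Longrightarrow> h \<in> H \<Longrightarrow> hdist f h \<le> hdist f g + hdist g h"
    by (simp add: hdist_def hnorm_diff_triangle)
qed

lemma limitin_H_metric_iff:
  assumes "\<And>n. s n \<in> H"
  shows "limitin H_metric.mtopology s f sequentially \<longleftrightarrow>
    f \<in> H \<and> (\<lambda>n. \<parallel>\<lambda>z. s n z - f z\<parallel>) \<longlonglongrightarrow> 0"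
proof (cases "f \<in> H")
  case True
  have "(\<lambda>n. \<parallel>\<lambda>z. s n z - f z\<parallel>) \<longlonglongrightarrow> 0 \<longleftrightarrow>
      (\<forall>e>0. eventually (\<lambda>n. \<parallel>\<lambda>z. s n z - f z\<parallel> < e) sequentially)"
    using assms True by (simp add: tendsto_iff dist_real_def)
  then show ?thesis
    using assms True by (simp add: H_metric.limitin_metric hdist_def)
qed (simp add: H_metric.limitin_metric)

lemma mcomplete_H_metric: "H_metric.mcomplete"
  unfolding H_metric.mcomplete_def H_metric.MCauchy_def
proof (intro allI impI)
  fix s :: "nat \<Rightarrow> complex \<Rightarrow> complex"
  assume s: "range s \<subseteq> H \<and> (\<forall>e>0. \<exists>N. \<forall>n n'. N \<le> n \<longrightarrow> N \<le> n' \<longrightarrow> hdist (s n) (s n') < e)"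
  then have sH: "\<And>n. s n \<in> H"
    by blast
  obtain f where "f \<in> H" "(\<lambda>n. \<parallel>\<lambda>z. s n z - f z\<parallel>) \<longlonglongrightarrow> 0"
  proof (rule Cauchy_convergent[OF sH])
    fix e :: real
    assume "e > 0"
    then show "\<exists>N. \<forall>m\<ge>N. \<forall>n\<ge>N. \<parallel>\<lambda>z. s m z - s n z\<parallel> < e"
      using s sH by (simp add: hdist_def)
  qed
  then show "\<exists>f. limitin H_metric.mtopology s f sequentially"
    using limitin_H_metric_iff[of s, OF sH] by blast
qed

lemma seminorm_bounded_if_bounded_on_ball:
  assumes nonneg: "\<And>f. f \<in> H \<Longrightarrow> \<phi> f \<ge> 0"
    and diff: "\<And>f g. f \<in> H \<Longrightarrow> g \<in> H \<Longrightarrow> \<phi> (\<lambda>z. f z - g z) \<le> \<phi> f + \<phi> g"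
    and scale: "\<And>f c. f \<in> H \<Longrightarrow> \<phi> (\<lambda>z. c * f z) \<le> cmod c * \<phi> f"
    and x: "x \<in> H" and r: "r > 0"
    and ball: "\<And>y. y \<in> H \<Longrightarrow> \<parallel>\<lambda>z. x z - y z\<parallel> < r \<Longrightarrow> \<phi> y \<le> m"
  obtains C where "C > 0" "\<And>f. f \<in> H \<Longrightarrow> \<phi> f \<le> C * \<parallel>f\<parallel>"
proof
  have m: "m \<ge> 0"
    using ball[OF x] nonneg[OF x] r by simp
  show "4 * m / r + 1 > 0"
    using m r by (simp add: add_nonneg_pos)
  fix f
  assume f: "f \<in> H"
  show "\<phi> f \<le> (4 * m / r + 1) * \<parallel>f\<parallel>"
  proof (cases "\<parallel>f\<parallel> = 0")
    case True
    then show ?thesis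
      using scale[OF f, of 0] f hnorm_eq_0_iff by simp
  next
    case False
    define c where "c = r / (2 * \<parallel>f\<parallel>)"
    have "\<parallel>f\<parallel> > 0"
      using False hnorm_nonneg[OF f] by linarith
    then have c: "c > 0"
      using r by (simp add: c_def)
    have "\<parallel>\<lambda>z. of_real c * f z\<parallel> = c * \<parallel>f\<parallel>"
      using hnorm_scale[OF f, of "of_real c"] c by simp
    then have cf: "\<parallel>\<lambda>z. of_real c * f z\<parallel> = r / 2"
      using False by (simp add: c_def)
    have y: "(\<lambda>z. x z + of_real c * f z) \<in> H"
      using x f by simp
    have "\<parallel>\<lambda>z. x z - (x z + of_real c * f z)\<parallel> = r / 2"
      using hnorm_minus[of "\<lambda>z. of_real c * f z"] f cf by simp
    then have "\<phi> (\<lambda>z. x z + of_real c * f z) \<le> m"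
      using ball[OF y] r by simp
    then have "\<phi> (\<lambda>z. of_real c * f z) \<le> 2 * m"
      using diff[OF y x] ball[OF x] r by simp
    moreover have "\<phi> f \<le> (1 / c) * \<phi> (\<lambda>z. of_real c * f z)"
      using scale[of "\<lambda>z. of_real c * f z" "of_real (1 / c)"] f c by (simp add: norm_divide)
    ultimately have "\<phi> f \<le> (1 / c) * (2 * m)"
      using c by (smt (verit) mult_left_mono divide_pos_pos)
    also have "\<dots> = 4 * m / r * \<parallel>f\<parallel>"
      using False r by (simp add: c_def field_simps)
    also have "\<dots> \<le> (4 * m / r + 1) * \<parallel>f\<parallel>"
      using f by (simp add: distrib_right)
    finally show ?thesis .
  qed
qed

text \<open>A lower semicontinuous seminorm on a Hilbert space is continuous: by Baire's theorem
  one of the closed sets where it is bounded by an integer has interior.\<close>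

lemma closed_seminorm_bounded:
  assumes nonneg: "\<And>f. f \<in> H \<Longrightarrow> \<phi> f \<ge> 0"
    and diff: "\<And>f g. f \<in> H \<Longrightarrow> g \<in> H \<Longrightarrow> \<phi> (\<lambda>z. f z - g z) \<le> \<phi> f + \<phi> g"
    and scale: "\<And>f c. f \<in> H \<Longrightarrow> \<phi> (\<lambda>z. c * f z) \<le> cmod c * \<phi> f"
    and closed: "\<And>s f m. (\<And>n. s n \<in> H) \<Longrightarrow> f \<in> H \<Longrightarrow> (\<lambda>n. \<parallel>\<lambda>z. s n z - f z\<parallel>) \<longlonglongrightarrow> 0
      \<Longrightarrow> (\<And>n. \<phi> (s n) \<le> m) \<Longrightarrow> \<phi> f \<le> m"
  obtains C where "C > 0" "\<And>f. f \<in> H \<Longrightarrow> \<phi> f \<le> C * \<parallel>f\<parallel>"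
proof -
  define E where "E m = {f\<in>H. \<phi> f \<le> real m}" for m :: nat
  have E_closed: "closedin H_metric.mtopology (E m)" for m
    unfolding H_metric.metric_closedin_iff_sequentially_closed
  proof (intro conjI allI impI)
    show "E m \<subseteq> H"
      by (auto simp: E_def)
    fix s f
    assume s: "range s \<subseteq> E m \<and> limitin H_metric.mtopology s f sequentially"
    then have sH: "\<And>n. s n \<in> H" and bound: "\<And>n. \<phi> (s n) \<le> real m"
      by (auto simp: E_def)
    then have "f \<in> H" "(\<lambda>n. \<parallel>\<lambda>z. s n z - f z\<parallel>) \<longlonglongrightarrow> 0"
      using s limitin_H_metric_iff[of s f] by auto
    then show "f \<in> E m"
      using closed[OF sH _ _ bound] by (simp add: E_def)
  qed
  have "f \<in> E (nat \<lceil>\<phi> f\<rceil>)" if "f \<in> H" for f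
    using that real_nat_ceiling_ge[of "\<phi> f"] by (simp add: E_def)
  then have "\<Union>(range E) = H"
    by (auto simp: E_def)
  then have "H_metric.mtopology interior_of \<Union>(range E) = H"
    using interior_of_topspace[of H_metric.mtopology] by simp
  then have "H_metric.mtopology interior_of \<Union>(range E) \<noteq> {}"
    using zero_mem by blast
  then have "\<exists>m. H_metric.mtopology interior_of E m \<noteq> {}"
  proof (rule contrapos_np)
    assume "\<nexists>m. H_metric.mtopology interior_of E m \<noteq> {}"
    then show "H_metric.mtopology interior_of \<Union>(range E) = {}"
      using E_closed by (rule_tac H_metric.metric_Baire_category_alt[OF mcomplete_H_metric]) auto
  qed
  then obtain m x where x_int: "x \<in> H_metric.mtopology interior_of E m"
    by blast
  moreover have "openin H_metric.mtopology (H_metric.mtopology interior_of E m)"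
    by simp
  ultimately obtain r where r: "r > 0"
    and mball: "H_metric.mball x r \<subseteq> H_metric.mtopology interior_of E m"
    unfolding H_metric.openin_mtopology by blast
  have ball: "H_metric.mball x r \<subseteq> E m"
    using mball interior_of_subset by (rule order.trans)
  have "x \<in> E m"
    by (rule subsetD[OF interior_of_subset x_int])
  then have x: "x \<in> H"
    by (simp add: E_def)
  show ?thesis
  proof (rule seminorm_bounded_if_bounded_on_ball[OF nonneg diff scale x r])
    fix y
    assume "y \<in> H" "\<parallel>\<lambda>z. x z - y z\<parallel> < r"
    then have "y \<in> H_metric.mball x r"
      using x by (simp add: hdist_def)
    then show "\<phi> y \<le> real m"
      using ball by (auto simp: E_def)
  qed (use that in blast)+
qed

end

context fun_hilbert_space
begin

lemma ip_right_lipschitz: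
  "a \<in> H \<Longrightarrow> x \<in> H \<Longrightarrow> y \<in> H \<Longrightarrow> cmod (ip a x - ip a y) \<le> \<parallel>a\<parallel> * \<parallel>\<lambda>z. x z - y z\<parallel>"
  using Cauchy_Schwarz[of a "\<lambda>z. x z - y z"] by (simp add: ip_diff_right)

end

locale disc_rkhs =
  fixes H :: "(complex \<Rightarrow> complex) set"
    and ip :: "(complex \<Rightarrow> complex) \<Rightarrow> (complex \<Rightarrow> complex) \<Rightarrow> complex"
  assumes rkhs_disc: "rkhs_disc H ip"

sublocale disc_rkhs \<subseteq> fun_hilbert_space
  using rkhs_disc by unfold_locales (simp add: rkhs_disc_def)

context disc_rkhs
begin

lemma RK_reproducing:
  assumes w: "w \<in> disc"
  shows RK_mem: "RK H ip w \<in> H" and RK_reproduces: "\<And>f. f \<in> H \<Longrightarrow> f w = ip f (RK H ip w)"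
proof -
  obtain k where k: "k \<in> H" "\<forall>f\<in>H. f w = ip f k"
    using rkhs_disc w unfolding rkhs_disc_def by blast
  have "RK H ip w = k"
    unfolding RK_def
  proof (rule the_equality)
    fix k'
    assume k': "k' \<in> H \<and> (\<forall>f\<in>H. f w = ip f k')"
    let ?d = "\<lambda>z. k' z - k z"
    have "ip ?d ?d = ip ?d k' - ip ?d k"
      using k k' by (simp add: ip_diff_right)
    also have "\<dots> = 0"
      using k k' by simp
    finally show "k' = k"
      using ip_self_eq_0D[of ?d] k k' by (simp add: fun_eq_iff)
  qed (use k in blast)
  with k show "RK H ip w \<in> H" "\<And>f. f \<in> H \<Longrightarrow> f w = ip f (RK H ip w)"
    by auto
qed

lemma eval_le_hnorm: "w \<in> disc \<Longrightarrow> f \<in> H \<Longrightarrow> cmod (f w) \<le> \<parallel>f\<parallel> * \<parallel>RK H ip w\<parallel>"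
  using RK_reproduces Cauchy_Schwarz RK_mem by metis

lemma eval_tendsto:
  assumes sH: "\<And>n. s n \<in> H" and f: "f \<in> H" and lim: "(\<lambda>n. \<parallel>\<lambda>z. s n z - f z\<parallel>) \<longlonglongrightarrow> 0"
    and w: "w \<in> disc"
  shows "(\<lambda>n. s n w) \<longlonglongrightarrow> f w"
proof -
  have "(\<lambda>n. s n w - f w) \<longlonglongrightarrow> 0"
  proof (rule Lim_null_comparison)
    show "\<forall>\<^sub>F n in sequentially. norm (s n w - f w) \<le> \<parallel>\<lambda>z. s n z - f z\<parallel> * \<parallel>RK H ip w\<parallel>"
      using eval_le_hnorm[OF w, of "\<lambda>z. s n z - f z" for n] sH f by (intro always_eventually) auto
    show "(\<lambda>n. \<parallel>\<lambda>z. s n z - f z\<parallel> * \<parallel>RK H ip w\<parallel>) \<longlonglongrightarrow> 0"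
      using tendsto_mult_left_zero[OF lim] by simp
  qed
  then show ?thesis
    by (simp add: LIM_zero_iff)
qed

lemma closed_subspace_containing_kernels:
  assumes V: "closed_subspace V" and RK: "\<And>w. w \<in> disc \<Longrightarrow> RK H ip w \<in> V" and h: "h \<in> H"
  shows "h \<in> V"
proof -
  obtain p where pV: "p \<in> V" and orth: "\<And>v. v \<in> V \<Longrightarrow> ip (\<lambda>z. h z - p z) v = 0"
    using orthogonal_projection_exists[OF V h] by blast
  have pH: "p \<in> H"
    using pV closed_subspace_subset[OF V] by blast
  have "h w = p w" for w
  proof (cases "w \<in> disc")
    case True
    then have "h w - p w = ip (\<lambda>z. h z - p z) (RK H ip w)"
      using RK_reproduces[OF True, of "\<lambda>z. h z - p z"] h pH by simp
    then show ?thesis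
      using orth[OF RK[OF True]] by simp
  next
    case False
    then show ?thesis
      using vanishes_outside_disc[OF h False] vanishes_outside_disc[OF pH False] by simp
  qed
  then have "h = p"
    by (rule ext)
  with pV show ?thesis
    by simp
qed

lemma weakly_convergent_closed_subspace:
  assumes hs: "\<And>k. hs k \<in> H" and h: "h \<in> H" and bound: "\<And>k. \<parallel>hs k\<parallel> \<le> m"
  shows "closed_subspace {x\<in>H. (\<lambda>k. ip (hs k) x) \<longlonglongrightarrow> ip h x}"
  unfolding closed_subspace_def
proof (intro conjI allI ballI impI)
  fix f g
  assume "f \<in> {x\<in>H. (\<lambda>k. ip (hs k) x) \<longlonglongrightarrow> ip h x}" "g \<in> {x\<in>H. (\<lambda>k. ip (hs k) x) \<longlonglongrightarrow> ip h x}"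
  then show "(\<lambda>z. f z + g z) \<in> {x\<in>H. (\<lambda>k. ip (hs k) x) \<longlonglongrightarrow> ip h x}"
    using hs h by (auto simp: ip_add_right intro: tendsto_add)
next
  fix f c
  assume "f \<in> {x\<in>H. (\<lambda>k. ip (hs k) x) \<longlonglongrightarrow> ip h x}"
  then show "(\<lambda>z. c * f z) \<in> {x\<in>H. (\<lambda>k. ip (hs k) x) \<longlonglongrightarrow> ip h x}"
    using hs h by (auto simp: ip_scale_right intro: tendsto_mult_left)
next
  fix s x
  assume "(\<forall>n. s n \<in> {x\<in>H. (\<lambda>k. ip (hs k) x) \<longlonglongrightarrow> ip h x}) \<and> x \<in> H \<and>
    (\<lambda>n. \<parallel>\<lambda>z. s n z - x z\<parallel>) \<longlonglongrightarrow> 0"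
  then have sH: "\<And>n. s n \<in> H" and s_lim: "\<And>n. (\<lambda>k. ip (hs k) (s n)) \<longlonglongrightarrow> ip h (s n)"
    and x: "x \<in> H" and lim: "(\<lambda>n. \<parallel>\<lambda>z. s n z - x z\<parallel>) \<longlonglongrightarrow> 0"
    by auto
  define K where "K = \<bar>m\<bar> + \<parallel>h\<parallel> + 1"
  have K: "K > 0"
    using h by (simp add: K_def add_nonneg_pos)
  have "(\<lambda>k. ip (hs k) x) \<longlonglongrightarrow> ip h x"
  proof (rule LIMSEQ_I)
    fix e :: real
    assume e: "e > 0"
    obtain n where n: "\<parallel>\<lambda>z. s n z - x z\<parallel> < e / (2 * K)"
      using order_tendstoD(2)[OF lim, of "e / (2 * K)"] e K by (auto dest: eventually_happens)
    obtain k0 where k0: "\<And>k. k \<ge> k0 \<Longrightarrow> cmod (ip (hs k) (s n) - ip h (s n)) < e / 2"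
      using LIMSEQ_D[OF s_lim[of n], of "e / 2"] e by auto
    have "cmod (ip (hs k) x - ip h x) < e" if "k \<ge> k0" for k
    proof -
      have lip1: "cmod (ip (hs k) x - ip (hs k) (s n)) \<le> \<parallel>hs k\<parallel> * \<parallel>\<lambda>z. s n z - x z\<parallel>"
        using ip_right_lipschitz[OF hs x sH, of k n] hnorm_diff_commute[OF x sH, of n] by simp
      have lip2: "cmod (ip h (s n) - ip h x) \<le> \<parallel>h\<parallel> * \<parallel>\<lambda>z. s n z - x z\<parallel>"
        using ip_right_lipschitz[OF h sH x, of n] .
      have "cmod (ip (hs k) x - ip h x) \<le>
          cmod (ip (hs k) x - ip (hs k) (s n)) + cmod (ip (hs k) (s n) - ip h (s n)) +
          cmod (ip h (s n) - ip h x)"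
        using norm_triangle_ineq[of "ip (hs k) x - ip (hs k) (s n) + (ip (hs k) (s n) - ip h (s n))"
            "ip h (s n) - ip h x"]
          norm_triangle_ineq[of "ip (hs k) x - ip (hs k) (s n)" "ip (hs k) (s n) - ip h (s n)"]
        by simp
      also have "\<dots> \<le> \<parallel>hs k\<parallel> * \<parallel>\<lambda>z. s n z - x z\<parallel> + cmod (ip (hs k) (s n) - ip h (s n)) +
          \<parallel>h\<parallel> * \<parallel>\<lambda>z. s n z - x z\<parallel>"
        using lip1 lip2 by linarith
      also have "\<dots> \<le> K * \<parallel>\<lambda>z. s n z - x z\<parallel> + cmod (ip (hs k) (s n) - ip h (s n))"
      proof -
        have d: "\<parallel>\<lambda>z. s n z - x z\<parallel> \<ge> 0"
          using sH x by simp
        then have "\<parallel>hs k\<parallel> * \<parallel>\<lambda>z. s n z - x z\<parallel> \<le> \<bar>m\<bar> * \<parallel>\<lambda>z. s n z - x z\<parallel>"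
          using bound[of k] by (intro mult_right_mono) auto
        moreover have "K * \<parallel>\<lambda>z. s n z - x z\<parallel> =
            \<bar>m\<bar> * \<parallel>\<lambda>z. s n z - x z\<parallel> + \<parallel>h\<parallel> * \<parallel>\<lambda>z. s n z - x z\<parallel> + \<parallel>\<lambda>z. s n z - x z\<parallel>"
          by (simp add: K_def algebra_simps)
        ultimately show ?thesis
          using d by linarith
      qed
      also have "\<dots> < e / 2 + e / 2"
        using n K k0[OF that] by (simp add: field_simps)
      finally show ?thesis by simp
    qed
    then show "\<exists>k0. \<forall>k\<ge>k0. norm (ip (hs k) x - ip h x) < e"
      by blast
  qed
  with x show "x \<in> {x\<in>H. (\<lambda>k. ip (hs k) x) \<longlonglongrightarrow> ip h x}"
    by blast
qed (use hs h in auto)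

lemma hnorm_le_of_pointwise_limit:
  assumes hs: "\<And>k. hs k \<in> H" and h: "h \<in> H"
    and pointwise: "\<And>w. w \<in> disc \<Longrightarrow> (\<lambda>k. hs k w) \<longlonglongrightarrow> h w"
    and bound: "\<And>k. \<parallel>hs k\<parallel> \<le> m"
  shows "\<parallel>h\<parallel> \<le> m"
proof -
  have m: "m \<ge> 0"
    using bound[of 0] hnorm_nonneg[OF hs[of 0]] by linarith
  have "RK H ip w \<in> {x\<in>H. (\<lambda>k. ip (hs k) x) \<longlonglongrightarrow> ip h x}" if "w \<in> disc" for w
    using pointwise[OF that] RK_reproduces[OF that] hs h RK_mem[OF that] by simp
  then have "h \<in> {x\<in>H. (\<lambda>k. ip (hs k) x) \<longlonglongrightarrow> ip h x}"
    by (rule closed_subspace_containing_kernels[OF weakly_convergent_closed_subspace[OF hs h bound] _ h])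
  then have lim: "(\<lambda>k. ip (hs k) h) \<longlonglongrightarrow> ip h h"
    by simp
  have "cmod (ip (hs k) h) \<le> m * \<parallel>h\<parallel>" for k
    by (rule order_trans[OF Cauchy_Schwarz[OF hs h] mult_right_mono[OF bound hnorm_nonneg[OF h]]])
  then have "cmod (ip h h) \<le> m * \<parallel>h\<parallel>"
    by (intro Lim_norm_ubound[OF _ lim]) auto
  moreover have "cmod (ip h h) = \<parallel>h\<parallel> * \<parallel>h\<parallel>"
    using h by (simp add: ip_self_eq power2_eq_square norm_mult)
  ultimately have "\<parallel>h\<parallel> * \<parallel>h\<parallel> \<le> m * \<parallel>h\<parallel>"
    by simp
  then show ?thesis
    using m h by (cases "\<parallel>h\<parallel> = 0") (auto simp: mult_le_cancel_right)
qed

end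

abbreviation one_disc :: "complex \<Rightarrow> complex"
  where "one_disc \<equiv> dres (\<lambda>_. 1)"

lemma zero_in_disc [simp]: "0 \<in> disc"
  by (simp add: disc_def)

locale property_A_space =
  fixes H :: "(complex \<Rightarrow> complex) set"
    and ip :: "(complex \<Rightarrow> complex) \<Rightarrow> (complex \<Rightarrow> complex) \<Rightarrow> complex"
  assumes property_A: "property_A H ip"

sublocale property_A_space \<subseteq> disc_rkhs
  using property_A by unfold_locales (simp add: property_A_def)

context property_A_space
begin

lemma Mz_mem [simp]: "f \<in> H \<Longrightarrow> (\<lambda>z. z * f z) \<in> H"
  using property_A unfolding property_A_def Mz_def by blast

lemma RK_0_eq_one_disc: "RK H ip 0 = one_disc"
proof
  fix w
  show "RK H ip 0 w = one_disc w"
  proof (cases "w \<in> disc")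
    case True
    then show ?thesis
      using property_A by (simp add: property_A_def kernel_def dres_def)
  next
    case False
    then show ?thesis
      using vanishes_outside_disc[OF RK_mem[OF zero_in_disc] False] by (simp add: dres_def)
  qed
qed

lemma one_disc_mem [simp]: "one_disc \<in> H"
  using RK_mem[OF zero_in_disc] by (simp add: RK_0_eq_one_disc)

lemma dres_poly_mem [simp]: "dres (poly p) \<in> H"
proof (induction p)
  case 0
  show ?case
    by (simp add: dres_def)
next
  case (pCons a p)
  have "dres (poly (pCons a p)) = (\<lambda>z. a * one_disc z + z * dres (poly p) z)"
    by (simp add: dres_def fun_eq_iff)
  then show ?case
    using pCons.IH by (simp only:) simp
qed

lemma poly_approx: "f \<in> H \<Longrightarrow> e > 0 \<Longrightarrow> \<exists>p. \<parallel>\<lambda>z. f z - dres (poly p) z\<parallel> < e"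
  using property_A unfolding property_A_def hdiff_def by blast

end

locale property_A_algebra = property_A_space +
  assumes mult_closed: "\<forall>f\<in>H. \<forall>g\<in>H. (\<lambda>z. f z * g z) \<in> H"
begin

lemma mult_mem [simp]: "f \<in> H \<Longrightarrow> g \<in> H \<Longrightarrow> (\<lambda>z. f z * g z) \<in> H"
  using mult_closed by blast

lemma one_disc_mult [simp]: "f \<in> H \<Longrightarrow> (\<lambda>z. one_disc z * f z) = f"
  using vanishes_outside_disc by (auto simp: fun_eq_iff dres_def)

lemma mult_one_disc [simp]: "f \<in> H \<Longrightarrow> (\<lambda>z. f z * one_disc z) = f"
  using vanishes_outside_disc by (auto simp: fun_eq_iff dres_def)

lemma hnorm_mult_left_le_of_limit:
  assumes sH: "\<And>n. s n \<in> H" and f: "f \<in> H" and g: "g \<in> H"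
    and lim: "(\<lambda>n. \<parallel>\<lambda>z. s n z - g z\<parallel>) \<longlonglongrightarrow> 0" and bound: "\<And>n. \<parallel>\<lambda>z. f z * s n z\<parallel> \<le> m"
  shows "\<parallel>\<lambda>z. f z * g z\<parallel> \<le> m"
proof (rule hnorm_le_of_pointwise_limit[of "\<lambda>n z. f z * s n z"])
  fix w
  assume "w \<in> disc"
  then show "(\<lambda>n. f w * s n w) \<longlonglongrightarrow> f w * g w"
    using eval_tendsto[OF sH g lim] by (intro tendsto_mult_left)
qed (use sH f g bound in simp_all)

lemma multiplication_operator_bounded:
  assumes f: "f \<in> H"
  obtains C where "C > 0" "\<And>g. g \<in> H \<Longrightarrow> \<parallel>\<lambda>z. f z * g z\<parallel> \<le> C * \<parallel>g\<parallel>"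
proof (rule closed_seminorm_bounded[of "\<lambda>g. \<parallel>\<lambda>z. f z * g z\<parallel>"])
  fix g h
  assume g: "g \<in> H" and h: "h \<in> H"
  have "(\<lambda>z. f z * (g z - h z)) = (\<lambda>z. f z * g z - f z * h z)"
    by (simp add: algebra_simps)
  then show "\<parallel>\<lambda>z. f z * (g z - h z)\<parallel> \<le> \<parallel>\<lambda>z. f z * g z\<parallel> + \<parallel>\<lambda>z. f z * h z\<parallel>"
    using hnorm_triangle_diff[of "\<lambda>z. f z * g z" "\<lambda>z. f z * h z"] f g h by simp
next
  fix g c
  assume g: "g \<in> H"
  have "(\<lambda>z. f z * (c * g z)) = (\<lambda>z. c * (f z * g z))"
    by (simp add: algebra_simps)
  then show "\<parallel>\<lambda>z. f z * (c * g z)\<parallel> \<le> cmod c * \<parallel>\<lambda>z. f z * g z\<parallel>"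
    using hnorm_scale[of "\<lambda>z. f z * g z" c] f g by simp
next
  fix s g m
  assume "\<And>n. s n \<in> H" "g \<in> H" "(\<lambda>n. \<parallel>\<lambda>z. s n z - g z\<parallel>) \<longlonglongrightarrow> 0"
    "\<And>n. \<parallel>\<lambda>z. f z * s n z\<parallel> \<le> m"
  then show "\<parallel>\<lambda>z. f z * g z\<parallel> \<le> m"
    using hnorm_mult_left_le_of_limit f by blast
qed (use f that in auto)

definition mult_norm :: "(complex \<Rightarrow> complex) \<Rightarrow> real" where
  "mult_norm f = (SUP g\<in>{g\<in>H. \<parallel>g\<parallel> \<le> 1}. \<parallel>\<lambda>z. f z * g z\<parallel>)"

lemma mult_norm_upper:
  assumes f: "f \<in> H" and g: "g \<in> H" "\<parallel>g\<parallel> \<le> 1"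
  shows "\<parallel>\<lambda>z. f z * g z\<parallel> \<le> mult_norm f"
proof -
  obtain C where C: "C > 0" "\<And>g. g \<in> H \<Longrightarrow> \<parallel>\<lambda>z. f z * g z\<parallel> \<le> C * \<parallel>g\<parallel>"
    using multiplication_operator_bounded[OF f] by blast
  have bound: "\<parallel>\<lambda>z. f z * h z\<parallel> \<le> C" if "h \<in> H \<and> \<parallel>h\<parallel> \<le> 1" for h
    using C(2)[of h] mult_left_le[of "\<parallel>h\<parallel>" C] C(1) that by linarith
  have "bdd_above ((\<lambda>g. \<parallel>\<lambda>z. f z * g z\<parallel>) ` {g\<in>H. \<parallel>g\<parallel> \<le> 1})"
    by (rule bdd_aboveI2[of _ _ C]) (use bound in simp)
  then show ?thesis
    unfolding mult_norm_def using g by (auto intro: cSUP_upper)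
qed

lemma mult_norm_least:
  "(\<And>g. g \<in> H \<Longrightarrow> \<parallel>g\<parallel> \<le> 1 \<Longrightarrow> \<parallel>\<lambda>z. f z * g z\<parallel> \<le> M) \<Longrightarrow> mult_norm f \<le> M"
  unfolding mult_norm_def by (rule cSUP_least) (auto intro: exI[of _ "\<lambda>_. 0"])

lemma mult_norm_nonneg: "f \<in> H \<Longrightarrow> mult_norm f \<ge> 0"
  using mult_norm_upper[of f "\<lambda>_. 0"] by simp

lemma hnorm_mult_le:
  assumes f: "f \<in> H" and g: "g \<in> H"
  shows "\<parallel>\<lambda>z. f z * g z\<parallel> \<le> mult_norm f * \<parallel>g\<parallel>"
proof (cases "\<parallel>g\<parallel> = 0")
  case True
  then show ?thesis
    using g hnorm_eq_0_iff by simp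
next
  case False
  then have ng: "\<parallel>g\<parallel> > 0"
    using g hnorm_nonneg by (metis order_less_le)
  define c where "c = complex_of_real (1 / \<parallel>g\<parallel>)"
  have cg: "(\<lambda>z. c * g z) \<in> H" "\<parallel>\<lambda>z. c * g z\<parallel> = 1"
    using g ng hnorm_scale[OF g, of c] by (simp_all add: c_def norm_divide del: of_real_divide)
  have "\<parallel>\<lambda>z. f z * g z\<parallel> / \<parallel>g\<parallel> = \<parallel>\<lambda>z. f z * (c * g z)\<parallel>"
    using hnorm_scale[of "\<lambda>z. f z * g z" c] f g ng by (simp add: c_def norm_divide mult.left_commute)
  also have "\<dots> \<le> mult_norm f"
    using mult_norm_upper[OF f cg(1)] cg(2) by simp
  finally show ?thesis
    using ng by (simp add: divide_le_eq)
qed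

lemma mult_norm_scale_le:
  assumes f: "f \<in> H"
  shows "mult_norm (\<lambda>z. c * f z) \<le> cmod c * mult_norm f"
proof (rule mult_norm_least)
  fix g
  assume g: "g \<in> H" "\<parallel>g\<parallel> \<le> 1"
  have "\<parallel>\<lambda>z. c * f z * g z\<parallel> = cmod c * \<parallel>\<lambda>z. f z * g z\<parallel>"
    using hnorm_scale[of "\<lambda>z. f z * g z" c] f g by (simp add: mult.assoc)
  also have "\<dots> \<le> cmod c * mult_norm f"
    using mult_norm_upper[OF f g] by (simp add: mult_left_mono)
  finally show "\<parallel>\<lambda>z. c * f z * g z\<parallel> \<le> cmod c * mult_norm f" .
qed

lemma mult_norm_le_hnorm:
  obtains C where "C > 0" "\<And>f. f \<in> H \<Longrightarrow> mult_norm f \<le> C * \<parallel>f\<parallel>"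
proof (rule closed_seminorm_bounded[of mult_norm])
  fix f h
  assume f: "f \<in> H" and h: "h \<in> H"
  show "mult_norm (\<lambda>z. f z - h z) \<le> mult_norm f + mult_norm h"
  proof (rule mult_norm_least)
    fix g
    assume g: "g \<in> H" "\<parallel>g\<parallel> \<le> 1"
    have "(\<lambda>z. (f z - h z) * g z) = (\<lambda>z. f z * g z - h z * g z)"
      by (simp add: algebra_simps)
    then have "\<parallel>\<lambda>z. (f z - h z) * g z\<parallel> \<le> \<parallel>\<lambda>z. f z * g z\<parallel> + \<parallel>\<lambda>z. h z * g z\<parallel>"
      using hnorm_triangle_diff[of "\<lambda>z. f z * g z" "\<lambda>z. h z * g z"] f g h by simp
    also have "\<dots> \<le> mult_norm f + mult_norm h"
      using mult_norm_upper f h g by (meson add_mono)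
    finally show "\<parallel>\<lambda>z. (f z - h z) * g z\<parallel> \<le> mult_norm f + mult_norm h" .
  qed
next
  fix f c
  assume "f \<in> H"
  then show "mult_norm (\<lambda>z. c * f z) \<le> cmod c * mult_norm f"
    by (rule mult_norm_scale_le)
next
  fix s f m
  assume sH: "\<And>n. s n \<in> H" and f: "f \<in> H" and lim: "(\<lambda>n. \<parallel>\<lambda>z. s n z - f z\<parallel>) \<longlonglongrightarrow> 0"
    and bound: "\<And>n. mult_norm (s n) \<le> m"
  show "mult_norm f \<le> m"
  proof (rule mult_norm_least)
    fix g
    assume g: "g \<in> H" "\<parallel>g\<parallel> \<le> 1"
    have m: "m \<ge> 0"
      using bound[of 0] mult_norm_nonneg[OF sH[of 0]] by linarith
    have "\<parallel>\<lambda>z. s n z * g z\<parallel> \<le> m" for n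
      using hnorm_mult_le[OF sH g(1), of n] mult_mono[OF bound[of n] g(2) m hnorm_nonneg[OF g(1)]]
      by simp
    then show "\<parallel>\<lambda>z. f z * g z\<parallel> \<le> m"
      using hnorm_mult_left_le_of_limit[OF sH g(1) f lim] by (simp add: mult.commute)
  qed
qed (use mult_norm_nonneg that in blast)+

lemma hnorm_le_mult_norm: "f \<in> H \<Longrightarrow> \<parallel>f\<parallel> \<le> mult_norm f * \<parallel>one_disc\<parallel>"
  using hnorm_mult_le[of f one_disc] by simp

text \<open>The kernel function at w is an eigenvector of the adjoint of multiplication by f,
  with eigenvalue the conjugate of f w.\<close>

lemma norm_le_mult_norm:
  assumes f: "f \<in> H" and w: "w \<in> disc"
  shows "cmod (f w) \<le> mult_norm f"
proof -
  let ?k = "RK H ip w"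
  have k: "?k \<in> H"
    using RK_mem[OF w] .
  show ?thesis
  proof (cases "\<parallel>?k\<parallel> = 0")
    case True
    then have "f w = 0"
      using RK_reproduces[OF w f] k f hnorm_eq_0_iff by simp
    then show ?thesis
      using mult_norm_nonneg[OF f] by simp
  next
    case False
    then have nk: "\<parallel>?k\<parallel> > 0"
      using k hnorm_nonneg by (metis order_less_le)
    have "?k w = of_real (\<parallel>?k\<parallel>\<^sup>2)"
      using RK_reproduces[OF w k] ip_self_eq[OF k] by simp
    then have "ip (\<lambda>z. f z * ?k z) ?k = f w * of_real (\<parallel>?k\<parallel>\<^sup>2)"
      using RK_reproduces[OF w, of "\<lambda>z. f z * ?k z"] f k by simp
    then have "cmod (f w) * \<parallel>?k\<parallel>\<^sup>2 = cmod (ip (\<lambda>z. f z * ?k z) ?k)"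
      by (simp add: norm_mult norm_power)
    also have "\<dots> \<le> \<parallel>\<lambda>z. f z * ?k z\<parallel> * \<parallel>?k\<parallel>"
      using Cauchy_Schwarz f k by simp
    also have "\<dots> \<le> mult_norm f * \<parallel>?k\<parallel> * \<parallel>?k\<parallel>"
      using hnorm_mult_le[OF f k] nk by simp
    finally show ?thesis
      using nk by (simp add: power2_eq_square)
  qed
qed

end

lemma closure_disc: "closure disc = cball 0 1"
  by (simp add: disc_def)

context fun_hilbert_space
begin

lemma sum_mem:
  assumes "finite A" "\<And>k. k \<in> A \<Longrightarrow> F k \<in> H"
  shows "(\<lambda>z. \<Sum>k\<in>A. F k z) \<in> H \<and> \<parallel>\<lambda>z. \<Sum>k\<in>A. F k z\<parallel> \<le> (\<Sum>k\<in>A. \<parallel>F k\<parallel>)"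
  using assms
proof (induction A rule: finite_induct)
  case (insert a A)
  then have "F a \<in> H" "(\<lambda>z. \<Sum>k\<in>A. F k z) \<in> H" "\<parallel>\<lambda>z. \<Sum>k\<in>A. F k z\<parallel> \<le> (\<Sum>k\<in>A. \<parallel>F k\<parallel>)"
    by auto
  with insert.hyps show ?case
    using hnorm_triangle[of "F a" "\<lambda>z. \<Sum>k\<in>A. F k z"] by simp
qed simp

lemma Cauchy_convergent_if_dominated:
  assumes SH: "\<And>n. S n \<in> H" and summable: "summable b"
    and dominated: "\<And>m n. m \<le> n \<Longrightarrow> \<parallel>\<lambda>z. S n z - S m z\<parallel> \<le> (\<Sum>k\<in>{m..<n}. b k)"
  obtains y where "y \<in> H" "(\<lambda>n. \<parallel>\<lambda>z. S n z - y z\<parallel>) \<longlonglongrightarrow> 0"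
proof (rule Cauchy_convergent[OF SH])
  fix e :: real
  assume "e > 0"
  then obtain N where N: "\<And>m n. m \<ge> N \<Longrightarrow> norm (\<Sum>k\<in>{m..<n}. b k) < e"
    using summable unfolding summable_Cauchy by blast
  have "\<parallel>\<lambda>z. S m z - S n z\<parallel> < e" if "m \<ge> N" "n \<ge> N" for m n
  proof (cases "n \<le> m")
    case True
    then show ?thesis
      using dominated[OF True] N[OF that(2), of m] by simp
  next
    case False
    then show ?thesis
      using dominated[of m n] N[OF that(1), of n] hnorm_diff_commute[OF SH SH, of m n] by simp
  qed
  then show "\<exists>N. \<forall>m\<ge>N. \<forall>n\<ge>N. \<parallel>\<lambda>z. S m z - S n z\<parallel> < e"
    by blast
qed (use that in blast)

definition hclosure :: "(complex \<Rightarrow> complex) set \<Rightarrow> (complex \<Rightarrow> complex) set" where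
  "hclosure S = {h\<in>H. \<forall>e>0. \<exists>g\<in>S. \<parallel>\<lambda>z. h z - g z\<parallel> < e}"

lemma subset_hclosure: "S \<subseteq> H \<Longrightarrow> S \<subseteq> hclosure S"
  unfolding hclosure_def by (auto intro!: bexI)

lemma hclosure_subset:
  assumes M: "closed_subspace M" and S: "S \<subseteq> M"
  shows "hclosure S \<subseteq> M"
proof
  fix h
  assume h: "h \<in> hclosure S"
  then have "\<exists>g\<in>S. \<parallel>\<lambda>z. h z - g z\<parallel> < inverse (real (Suc n))" for n
    by (simp add: hclosure_def)
  then obtain g where gS: "\<And>n. g n \<in> S" and close: "\<And>n. \<parallel>\<lambda>z. h z - g n z\<parallel> < inverse (real (Suc n))"
    by metis
  have gH: "g n \<in> H" for n
    using gS S closed_subspace_subset[OF M] by blast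
  have hH: "h \<in> H"
    using h by (simp add: hclosure_def)
  have "(\<lambda>n. \<parallel>\<lambda>z. g n z - h z\<parallel>) \<longlonglongrightarrow> 0"
  proof (rule tendsto_sandwich[OF _ _ tendsto_const LIMSEQ_inverse_real_of_nat])
    show "\<forall>\<^sub>F n in sequentially. 0 \<le> \<parallel>\<lambda>z. g n z - h z\<parallel>"
      using gH hH by simp
    show "\<forall>\<^sub>F n in sequentially. \<parallel>\<lambda>z. g n z - h z\<parallel> \<le> inverse (real (Suc n))"
      using close hnorm_diff_commute[OF hH gH] by (simp add: less_imp_le)
  qed
  then show "h \<in> M"
    using closed_subspace_limit[OF M _ hH] gS S by blast
qed

lemma closed_subspace_hclosure:
  assumes SH: "S \<subseteq> H" and zero: "(\<lambda>_. 0) \<in> S"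
    and add: "\<And>f g. f \<in> S \<Longrightarrow> g \<in> S \<Longrightarrow> (\<lambda>z. f z + g z) \<in> S"
    and scale: "\<And>f c. f \<in> S \<Longrightarrow> (\<lambda>z. c * f z) \<in> S"
  shows "closed_subspace (hclosure S)"
  unfolding closed_subspace_def
proof (intro conjI ballI allI impI)
  show "hclosure S \<subseteq> H"
    by (auto simp: hclosure_def)
  show "(\<lambda>_. 0) \<in> hclosure S"
    using subset_hclosure[OF SH] zero by blast
next
  fix f g
  assume f: "f \<in> hclosure S" and g: "g \<in> hclosure S"
  have fgH: "f \<in> H" "g \<in> H"
    using f g by (auto simp: hclosure_def)
  have "\<exists>u\<in>S. \<parallel>\<lambda>z. (f z + g z) - u z\<parallel> < e" if e: "e > 0" for e
  proof -
    obtain f' where f': "f' \<in> S" "\<parallel>\<lambda>z. f z - f' z\<parallel> < e / 2"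
      using f half_gt_zero[OF e] unfolding hclosure_def by blast
    obtain g' where g': "g' \<in> S" "\<parallel>\<lambda>z. g z - g' z\<parallel> < e / 2"
      using g half_gt_zero[OF e] unfolding hclosure_def by blast
    have "\<parallel>\<lambda>z. (f z + g z) - (f' z + g' z)\<parallel> \<le> \<parallel>\<lambda>z. f z - f' z\<parallel> + \<parallel>\<lambda>z. g z - g' z\<parallel>"
      using hnorm_triangle[of "\<lambda>z. f z - f' z" "\<lambda>z. g z - g' z"] fgH f'(1) g'(1) SH
      by (auto simp: algebra_simps subset_iff)
    then show ?thesis
      using add[OF f'(1) g'(1)] f'(2) g'(2) by (intro bexI[of _ "\<lambda>z. f' z + g' z"]) auto
  qed
  then show "(\<lambda>z. f z + g z) \<in> hclosure S"
    using fgH by (simp add: hclosure_def)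
next
  fix f c
  assume f: "f \<in> hclosure S"
  have fH: "f \<in> H"
    using f by (simp add: hclosure_def)
  have "\<exists>u\<in>S. \<parallel>\<lambda>z. c * f z - u z\<parallel> < e" if e: "e > 0" for e
  proof -
    have "e / (cmod c + 1) > 0"
      using e by (simp add: add_nonneg_pos)
    then obtain f' where f': "f' \<in> S" "\<parallel>\<lambda>z. f z - f' z\<parallel> < e / (cmod c + 1)"
      using f unfolding hclosure_def by blast
    have "\<parallel>\<lambda>z. c * f z - c * f' z\<parallel> = cmod c * \<parallel>\<lambda>z. f z - f' z\<parallel>"
      using hnorm_scale[of "\<lambda>z. f z - f' z" c] fH f' SH by (auto simp: algebra_simps)
    also have "\<dots> \<le> (cmod c + 1) * \<parallel>\<lambda>z. f z - f' z\<parallel>"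
      using fH f' SH by (intro mult_right_mono) auto
    also have "\<dots> < e"
      using f'(2) by (simp add: field_simps add_pos_nonneg)
    finally show ?thesis
      using scale[OF f'(1), of c] by (intro bexI[of _ "\<lambda>z. c * f' z"])
  qed
  then show "(\<lambda>z. c * f z) \<in> hclosure S"
    using fH by (simp add: hclosure_def)
next
  fix s f
  assume "(\<forall>n. s n \<in> hclosure S) \<and> f \<in> H \<and> (\<lambda>n. \<parallel>\<lambda>z. s n z - f z\<parallel>) \<longlonglongrightarrow> 0"
  then have s: "\<And>n. s n \<in> hclosure S" and f: "f \<in> H"
    and lim: "(\<lambda>n. \<parallel>\<lambda>z. s n z - f z\<parallel>) \<longlonglongrightarrow> 0"
    by auto
  have sH: "s n \<in> H" for n
    using s by (simp add: hclosure_def)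
  have "\<exists>u\<in>S. \<parallel>\<lambda>z. f z - u z\<parallel> < e" if e: "e > 0" for e
  proof -
    obtain n where n: "\<parallel>\<lambda>z. s n z - f z\<parallel> < e / 2"
      using order_tendstoD(2)[OF lim, of "e / 2"] e by (auto dest: eventually_happens)
    obtain u where u: "u \<in> S" "\<parallel>\<lambda>z. s n z - u z\<parallel> < e / 2"
      using s[of n] half_gt_zero[OF e] unfolding hclosure_def by blast
    have "\<parallel>\<lambda>z. f z - u z\<parallel> \<le> \<parallel>\<lambda>z. f z - s n z\<parallel> + \<parallel>\<lambda>z. s n z - u z\<parallel>"
      using hnorm_diff_triangle f sH u SH by blast
    then show ?thesis
      using n u hnorm_diff_commute[OF f sH] by (intro bexI[of _ u]) auto
  qed
  then show "f \<in> hclosure S"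
    using f by (simp add: hclosure_def)
qed

end

context property_A_algebra
begin

lemma uniform_poly_approx:
  assumes f: "f \<in> H" and e: "e > 0"
  obtains p where "\<And>z. z \<in> disc \<Longrightarrow> cmod (f z - poly p z) < e"
proof -
  obtain C where C: "C > 0" "\<And>f. f \<in> H \<Longrightarrow> mult_norm f \<le> C * \<parallel>f\<parallel>"
    using mult_norm_le_hnorm by blast
  obtain p where p: "\<parallel>\<lambda>z. f z - dres (poly p) z\<parallel> < e / C"
    using poly_approx[OF f, of "e / C"] e C by auto
  have "cmod (f z - poly p z) < e" if z: "z \<in> disc" for z
  proof -
    have "cmod ((\<lambda>z. f z - dres (poly p) z) z) \<le> mult_norm (\<lambda>z. f z - dres (poly p) z)"
      using f z by (intro norm_le_mult_norm) simp_all
    then have "cmod (f z - poly p z) \<le> mult_norm (\<lambda>z. f z - dres (poly p) z)"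
      using z by (simp add: dres_def)
    also have "\<dots> \<le> C * \<parallel>\<lambda>z. f z - dres (poly p) z\<parallel>"
      using C(2) f by simp
    also have "\<dots> < C * (e / C)"
      using p C(1) by (intro mult_strict_left_mono)
    finally show ?thesis
      using C(1) by simp
  qed
  then show ?thesis
    by (rule that)
qed

lemma uniformly_continuous_on_disc:
  assumes f: "f \<in> H"
  shows "uniformly_continuous_on disc f"
  unfolding uniformly_continuous_on_def
proof (intro allI impI)
  fix e :: real
  assume e: "e > 0"
  obtain p where p: "\<And>z. z \<in> disc \<Longrightarrow> dist (f z) (poly p z) < e / 3"
    using uniform_poly_approx[OF f, of "e / 3"] e by (auto simp: dist_norm)
  have "uniformly_continuous_on (cball 0 1) (poly p)"
    by (intro compact_uniformly_continuous) (auto intro: continuous_intros)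
  moreover have "e / 3 > 0"
    using e by simp
  ultimately obtain d where d: "d > 0" and close: "\<forall>x\<in>cball 0 1. \<forall>x'\<in>cball 0 1.
      dist x' x < d \<longrightarrow> dist (poly p x') (poly p x) < e / 3"
    unfolding uniformly_continuous_on_def by blast
  have "dist (f x') (f x) < e" if "x \<in> disc" "x' \<in> disc" "dist x' x < d" for x x'
  proof -
    have "dist (f x') (f x) \<le> dist (f x') (poly p x') + dist (poly p x') (poly p x) + dist (poly p x) (f x)"
      using dist_triangle[of "f x'" "f x" "poly p x'"] dist_triangle[of "poly p x'" "f x" "poly p x"]
      by linarith
    have "x \<in> cball 0 1" "x' \<in> cball 0 1"
      using that by (auto simp: disc_def)
    then have "dist (poly p x') (poly p x) < e / 3"
      using close that(3) by blast
    moreover have "dist (poly p x) (f x) < e / 3"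
      using p[OF that(1)] by (simp add: dist_commute)
    ultimately show ?thesis
      using p[OF that(2)] \<open>dist (f x') (f x) \<le> _\<close> by linarith
  qed
  with d show "\<exists>d>0. \<forall>x\<in>disc. \<forall>x'\<in>disc. dist x' x < d \<longrightarrow> dist (f x') (f x) < e"
    by blast
qed

lemma continuous_extension_exists:
  assumes f: "f \<in> H"
  obtains g where "continuous_on (cball 0 1) g" "\<And>z. z \<in> disc \<Longrightarrow> g z = f z"
proof -
  obtain g where g: "uniformly_continuous_on (closure disc) g" "\<And>z. z \<in> disc \<Longrightarrow> f z = g z"
    by (rule uniformly_continuous_on_extension_on_closure[OF uniformly_continuous_on_disc[OF f]])
      (rule that; assumption)
  show ?thesis
  proof (rule that)
    show "continuous_on (cball 0 1) g"
      using uniformly_continuous_imp_continuous[OF g(1)] by (simp add: closure_disc)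
  qed (use g(2) in simp)
qed

lemma hnorm_power_le:
  assumes x: "x \<in> H"
  shows "dres (\<lambda>z. x z ^ n) \<in> H \<and> \<parallel>dres (\<lambda>z. x z ^ n)\<parallel> \<le> mult_norm x ^ n * \<parallel>one_disc\<parallel>"
proof (induction n)
  case 0
  then show ?case
    by simp
next
  case (Suc n)
  have eq: "dres (\<lambda>z. x z ^ Suc n) = (\<lambda>z. x z * dres (\<lambda>z. x z ^ n) z)"
    using vanishes_outside_disc[OF x] by (auto simp: dres_def fun_eq_iff)
  have "\<parallel>\<lambda>z. x z * dres (\<lambda>z. x z ^ n) z\<parallel> \<le> mult_norm x * \<parallel>dres (\<lambda>z. x z ^ n)\<parallel>"
    using Suc x by (intro hnorm_mult_le) simp_all
  also have "\<dots> \<le> mult_norm x * (mult_norm x ^ n * \<parallel>one_disc\<parallel>)"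
    using Suc mult_norm_nonneg[OF x] by (intro mult_left_mono) simp_all
  finally show ?case
    unfolding eq using Suc x by (simp add: mult.assoc)
qed

end

context property_A_algebra
begin

lemma one_minus_mult_geometric_sum:
  assumes x: "x \<in> H"
  shows "(\<lambda>z. (one_disc z - x z) * (\<Sum>k<n. dres (\<lambda>z. x z ^ k) z)) = (\<lambda>z. one_disc z - dres (\<lambda>z. x z ^ n) z)"
proof
  fix z
  show "(one_disc z - x z) * (\<Sum>k<n. dres (\<lambda>z. x z ^ k) z) = one_disc z - dres (\<lambda>z. x z ^ n) z"
  proof (cases "z \<in> disc")
    case True
    then show ?thesis
      using one_diff_power_eq[of "x z" n] by (simp add: dres_def)
  qed (simp add: dres_def)
qed

lemma geometric_series_converges:
  assumes x: "x \<in> H" and q: "mult_norm x < 1"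
  obtains y where "y \<in> H" "(\<lambda>n. \<parallel>\<lambda>z. (\<Sum>k<n. dres (\<lambda>z. x z ^ k) z) - y z\<parallel>) \<longlonglongrightarrow> 0"
proof (rule Cauchy_convergent_if_dominated)
  let ?P = "\<lambda>k. dres (\<lambda>z. x z ^ k)"
  show SH: "(\<lambda>z. \<Sum>k<n. ?P k z) \<in> H" for n
    using sum_mem[of "{..<n}" ?P] hnorm_power_le[OF x] by simp
  show "summable (\<lambda>k. mult_norm x ^ k * \<parallel>one_disc\<parallel>)"
    using q mult_norm_nonneg[OF x] by (intro summable_mult2 summable_geometric) simp
  fix m n :: nat
  assume "m \<le> n"
  then have "(\<Sum>k<n. ?P k z) - (\<Sum>k<m. ?P k z) = (\<Sum>k\<in>{m..<n}. ?P k z)" for z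
    using sum_diff_nat_ivl[of 0 m n "\<lambda>k. ?P k z"] by (simp add: atLeast0LessThan)
  then have "\<parallel>\<lambda>z. (\<Sum>k<n. ?P k z) - (\<Sum>k<m. ?P k z)\<parallel> = \<parallel>\<lambda>z. \<Sum>k\<in>{m..<n}. ?P k z\<parallel>"
    by simp
  also have "\<dots> \<le> (\<Sum>k\<in>{m..<n}. \<parallel>?P k\<parallel>)"
    using sum_mem[of "{m..<n}" ?P] hnorm_power_le[OF x] by simp
  also have "\<dots> \<le> (\<Sum>k\<in>{m..<n}. mult_norm x ^ k * \<parallel>one_disc\<parallel>)"
    using hnorm_power_le[OF x] by (intro sum_mono) simp
  finally show "\<parallel>\<lambda>z. (\<Sum>k<n. ?P k z) - (\<Sum>k<m. ?P k z)\<parallel> \<le> (\<Sum>k\<in>{m..<n}. mult_norm x ^ k * \<parallel>one_disc\<parallel>)" .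
qed (use that in blast)

lemma neumann_series:
  assumes x: "x \<in> H" and q: "mult_norm x < 1"
  obtains y where "y \<in> H" "(\<lambda>z. (one_disc z - x z) * y z) = one_disc"
    "\<parallel>y\<parallel> \<le> \<parallel>one_disc\<parallel> / (1 - mult_norm x)"
proof -
  define S where "S n = (\<lambda>z. \<Sum>k<n. dres (\<lambda>z. x z ^ k) z)" for n
  obtain y where y: "y \<in> H" and lim: "(\<lambda>n. \<parallel>\<lambda>z. S n z - y z\<parallel>) \<longlonglongrightarrow> 0"
    using geometric_series_converges[OF x q] unfolding S_def by blast
  have SH: "S n \<in> H" for n
    using sum_mem[of "{..<n}" "\<lambda>k. dres (\<lambda>z. x z ^ k)"] hnorm_power_le[OF x] by (simp add: S_def)
  have omx: "(\<lambda>z. one_disc z - x z) \<in> H"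
    using x by simp
  define D where "D = (\<lambda>z. (one_disc z - x z) * y z - one_disc z)"
  have DH: "D \<in> H"
    using omx y by (simp add: D_def)
  have "\<parallel>D\<parallel> \<le> mult_norm (\<lambda>z. one_disc z - x z) * \<parallel>\<lambda>z. S n z - y z\<parallel> + mult_norm x ^ n * \<parallel>one_disc\<parallel>"
    for n
  proof -
    have "D = (\<lambda>z. (one_disc z - x z) * (y z - S n z) - dres (\<lambda>z. x z ^ n) z)"
      using fun_cong[OF one_minus_mult_geometric_sum[OF x, of n]]
      by (auto simp: D_def S_def fun_eq_iff algebra_simps)
    then have "\<parallel>D\<parallel> \<le> \<parallel>\<lambda>z. (one_disc z - x z) * (y z - S n z)\<parallel> + \<parallel>dres (\<lambda>z. x z ^ n)\<parallel>"
      using hnorm_triangle_diff[of "\<lambda>z. (one_disc z - x z) * (y z - S n z)" "dres (\<lambda>z. x z ^ n)"]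
        omx y SH hnorm_power_le[OF x] by simp
    also have "\<parallel>\<lambda>z. (one_disc z - x z) * (y z - S n z)\<parallel> \<le>
        mult_norm (\<lambda>z. one_disc z - x z) * \<parallel>\<lambda>z. S n z - y z\<parallel>"
      using hnorm_mult_le[of "\<lambda>z. one_disc z - x z" "\<lambda>z. y z - S n z"] omx y SH
        hnorm_diff_commute[OF y SH] by simp
    finally show ?thesis
      using hnorm_power_le[OF x, of n] by linarith
  qed
  moreover have "(\<lambda>n. mult_norm (\<lambda>z. one_disc z - x z) * \<parallel>\<lambda>z. S n z - y z\<parallel> + mult_norm x ^ n * \<parallel>one_disc\<parallel>)
      \<longlonglongrightarrow> mult_norm (\<lambda>z. one_disc z - x z) * 0 + 0 * \<parallel>one_disc\<parallel>"
    using q mult_norm_nonneg[OF x] by (intro tendsto_intros lim LIMSEQ_power_zero) simp_all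
  ultimately have "\<parallel>D\<parallel> \<le> 0"
    using LIMSEQ_le_const by fastforce
  then have "D = (\<lambda>_. 0)"
    using DH hnorm_nonneg[OF DH] hnorm_eq_0_iff by simp
  then have inverse: "(\<lambda>z. (one_disc z - x z) * y z) = one_disc"
    by (simp add: D_def fun_eq_iff)
  have "y = (\<lambda>z. one_disc z + x z * y z)"
    using fun_cong[OF inverse] fun_cong[OF one_disc_mult[OF y]] by (auto simp: fun_eq_iff algebra_simps)
  then have "\<parallel>y\<parallel> \<le> \<parallel>one_disc\<parallel> + mult_norm x * \<parallel>y\<parallel>"
    using hnorm_triangle[of one_disc "\<lambda>z. x z * y z"] hnorm_mult_le[OF x y] x y by simp
  then have "\<parallel>y\<parallel> \<le> \<parallel>one_disc\<parallel> / (1 - mult_norm x)"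
    using q by (simp add: field_simps)
  with y inverse that show ?thesis
    by blast
qed

lemma neumann_series_half:
  assumes x: "x \<in> H" and small: "mult_norm x \<le> 1 / 2"
  obtains y where "y \<in> H" "(\<lambda>z. (one_disc z - x z) * y z) = one_disc" "\<parallel>y\<parallel> \<le> 2 * \<parallel>one_disc\<parallel>"
proof -
  obtain y where y: "y \<in> H" "(\<lambda>z. (one_disc z - x z) * y z) = one_disc"
    "\<parallel>y\<parallel> \<le> \<parallel>one_disc\<parallel> / (1 - mult_norm x)"
    using neumann_series[OF x] small by force
  moreover have "\<parallel>one_disc\<parallel> / (1 - mult_norm x) \<le> 2 * \<parallel>one_disc\<parallel>"
    using small mult_right_mono[OF small hnorm_nonneg[OF one_disc_mem]] by (simp add: field_simps)
  ultimately show ?thesis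
    using that by force
qed

lemma closed_inv_subspace_iff:
  "closed_inv_subspace H ip M \<longleftrightarrow> closed_subspace M \<and> (\<forall>f\<in>M. (\<lambda>z. z * f z) \<in> M)"
  by (auto simp: closed_inv_subspace_def closed_subspace_def hdiff_def Mz_def)

lemma hclosure_mult_mem:
  assumes u: "u \<in> H" and SH: "S \<subseteq> H" and S: "\<And>g. g \<in> S \<Longrightarrow> (\<lambda>z. u z * g z) \<in> S"
    and h: "h \<in> hclosure S"
  shows "(\<lambda>z. u z * h z) \<in> hclosure S"
proof -
  have hH: "h \<in> H"
    using h by (simp add: hclosure_def)
  have "\<exists>g\<in>S. \<parallel>\<lambda>z. u z * h z - g z\<parallel> < e" if e: "e > 0" for e
  proof -
    have "e / (mult_norm u + 1) > 0"
      using e mult_norm_nonneg[OF u] by simp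
    then obtain g where g: "g \<in> S" "\<parallel>\<lambda>z. h z - g z\<parallel> < e / (mult_norm u + 1)"
      using h unfolding hclosure_def by blast
    have gH: "g \<in> H"
      using g SH by blast
    have "\<parallel>\<lambda>z. u z * h z - u z * g z\<parallel> \<le> mult_norm u * \<parallel>\<lambda>z. h z - g z\<parallel>"
      using hnorm_mult_le[of u "\<lambda>z. h z - g z"] u hH gH by (simp add: algebra_simps)
    also have "\<dots> \<le> (mult_norm u + 1) * \<parallel>\<lambda>z. h z - g z\<parallel>"
      using hH gH by (intro mult_right_mono) simp_all
    also have "\<dots> < e"
      using g(2) mult_norm_nonneg[OF u] by (simp add: field_simps)
    finally show ?thesis
      using S[OF g(1)] by (intro bexI[of _ "\<lambda>z. u z * g z"])
  qed
  then show ?thesis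
    using u hH by (simp add: hclosure_def)
qed

lemma closed_inv_subspace_mult:
  assumes M: "closed_inv_subspace H ip M" and f: "f \<in> M" and g: "g \<in> H"
  shows "(\<lambda>z. f z * g z) \<in> M"
proof -
  have M': "closed_subspace M" and Mz: "\<And>h. h \<in> M \<Longrightarrow> (\<lambda>z. z * h z) \<in> M"
    using M by (auto simp: closed_inv_subspace_iff)
  have fH: "f \<in> H"
    using f closed_subspace_subset[OF M'] by blast
  have poly_mult: "(\<lambda>z. f z * dres (poly p) z) \<in> M" for p
  proof (induction p)
    case 0
    then show ?case
      using closed_subspace_zero[OF M'] by (simp add: dres_def)
  next
    case (pCons a p)
    have "(\<lambda>z. f z * dres (poly (pCons a p)) z) = (\<lambda>z. a * f z + z * (f z * dres (poly p) z))"
      using vanishes_outside_disc[OF fH] by (auto simp: fun_eq_iff dres_def algebra_simps)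
    then show ?case
      using closed_subspace_add[OF M' closed_subspace_scale[OF M' f] Mz[OF pCons.IH]] by (simp only:)
  qed
  let ?S = "{\<lambda>z. f z * dres (poly p) z | p. True}"
  have "\<exists>u\<in>?S. \<parallel>\<lambda>z. f z * g z - u z\<parallel> < e" if e: "e > 0" for e
  proof -
    have "e / (mult_norm f + 1) > 0"
      using e mult_norm_nonneg[OF fH] by simp
    then obtain p where p: "\<parallel>\<lambda>z. g z - dres (poly p) z\<parallel> < e / (mult_norm f + 1)"
      using poly_approx[OF g] by blast
    have "\<parallel>\<lambda>z. f z * g z - f z * dres (poly p) z\<parallel> \<le> mult_norm f * \<parallel>\<lambda>z. g z - dres (poly p) z\<parallel>"
      using hnorm_mult_le[of f "\<lambda>z. g z - dres (poly p) z"] fH g by (simp add: algebra_simps)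
    also have "\<dots> \<le> (mult_norm f + 1) * \<parallel>\<lambda>z. g z - dres (poly p) z\<parallel>"
      using g by (intro mult_right_mono) simp_all
    also have "\<dots> < e"
      using p mult_norm_nonneg[OF fH] by (simp add: field_simps)
    finally show ?thesis
      by (intro bexI[of _ "\<lambda>z. f z * dres (poly p) z"]) auto
  qed
  then have "(\<lambda>z. f z * g z) \<in> hclosure ?S"
    using fH g by (simp add: hclosure_def)
  moreover have "?S \<subseteq> M"
    using poly_mult by blast
  ultimately show ?thesis
    using hclosure_subset[OF M'] by blast
qed

definition closed_ideal :: "(complex \<Rightarrow> complex) \<Rightarrow> (complex \<Rightarrow> complex) set" where
  "closed_ideal f = hclosure ((\<lambda>g z. f z * g z) ` H)"

lemma self_mem_closed_ideal:
  assumes f: "f \<in> H"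
  shows "f \<in> closed_ideal f"
proof -
  have "(\<lambda>g z. f z * g z) ` H \<subseteq> H"
    using f by auto
  moreover have "f \<in> (\<lambda>g z. f z * g z) ` H"
    using f by (intro image_eqI[of _ _ one_disc]) simp_all
  ultimately show ?thesis
    unfolding closed_ideal_def using subset_hclosure by blast
qed

lemma closed_inv_subspace_closed_ideal:
  assumes f: "f \<in> H"
  shows "closed_inv_subspace H ip (closed_ideal f)"
  unfolding closed_inv_subspace_iff closed_ideal_def
proof
  have image_H: "(\<lambda>g z. f z * g z) ` H \<subseteq> H"
    using f by auto
  show "closed_subspace (hclosure ((\<lambda>g z. f z * g z) ` H))"
  proof (rule closed_subspace_hclosure[OF image_H])
    show "(\<lambda>_. 0) \<in> (\<lambda>g z. f z * g z) ` H"
      by (auto intro!: image_eqI[of _ _ "\<lambda>_. 0"])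
    show "(\<lambda>z. u z + v z) \<in> (\<lambda>g z. f z * g z) ` H"
      if u: "u \<in> (\<lambda>g z. f z * g z) ` H" and v: "v \<in> (\<lambda>g z. f z * g z) ` H" for u v
    proof -
      obtain a b where "a \<in> H" "b \<in> H" "u = (\<lambda>z. f z * a z)" "v = (\<lambda>z. f z * b z)"
        using u v by blast
      then show ?thesis
        by (intro image_eqI[of _ _ "\<lambda>z. a z + b z"]) (simp_all add: algebra_simps)
    qed
    show "(\<lambda>z. c * u z) \<in> (\<lambda>g z. f z * g z) ` H" if u: "u \<in> (\<lambda>g z. f z * g z) ` H" for u c
    proof -
      obtain a where "a \<in> H" "u = (\<lambda>z. f z * a z)"
        using u by blast
      then show ?thesis
        by (intro image_eqI[of _ _ "\<lambda>z. c * a z"]) (simp_all add: algebra_simps)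
    qed
  qed
  have z_mult: "(\<lambda>z. z * h z) = (\<lambda>z. (z * one_disc z) * h z)" if "h \<in> H" for h
    using vanishes_outside_disc[OF that] by (auto simp: fun_eq_iff dres_def)
  show "\<forall>h\<in>hclosure ((\<lambda>g z. f z * g z) ` H). (\<lambda>z. z * h z) \<in> hclosure ((\<lambda>g z. f z * g z) ` H)"
  proof
    fix h
    assume h: "h \<in> hclosure ((\<lambda>g z. f z * g z) ` H)"
    have "(\<lambda>z. (z * one_disc z) * h z) \<in> hclosure ((\<lambda>g z. f z * g z) ` H)"
    proof (rule hclosure_mult_mem[OF _ image_H _ h])
      show "(\<lambda>z. z * one_disc z) \<in> H"
        by simp
      show "(\<lambda>z. (z * one_disc z) * u z) \<in> (\<lambda>g z. f z * g z) ` H"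
        if u: "u \<in> (\<lambda>g z. f z * g z) ` H" for u
      proof -
        obtain a where a: "a \<in> H" "u = (\<lambda>z. f z * a z)"
          using u by blast
        then have "(\<lambda>z. (z * one_disc z) * u z) = (\<lambda>z. f z * (z * a z))"
          using z_mult[of u] f by (simp add: algebra_simps)
        then show ?thesis
          using a by (intro image_eqI[of _ _ "\<lambda>z. z * a z"]) simp_all
      qed
    qed
    moreover have "h \<in> H"
      using h by (simp add: hclosure_def)
    ultimately show "(\<lambda>z. z * h z) \<in> hclosure ((\<lambda>g z. f z * g z) ` H)"
      by (subst z_mult) simp_all
  qed
qed

lemma inverse_if_one_mem_closed_ideal:
  assumes f: "f \<in> H" and one: "one_disc \<in> closed_ideal f"
  obtains \<psi> where "\<psi> \<in> H" "\<And>z. z \<in> disc \<Longrightarrow> f z * \<psi> z = 1"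
proof -
  obtain C where C: "C > 0" "\<And>f. f \<in> H \<Longrightarrow> mult_norm f \<le> C * \<parallel>f\<parallel>"
    using mult_norm_le_hnorm by blast
  have "1 / (2 * C) > 0"
    using C(1) by simp
  then obtain g where g: "g \<in> H" "\<parallel>\<lambda>z. one_disc z - f z * g z\<parallel> < 1 / (2 * C)"
    using one unfolding closed_ideal_def hclosure_def by blast
  define x where "x = (\<lambda>z. one_disc z - f z * g z)"
  have x: "x \<in> H"
    using f g by (simp add: x_def)
  have "mult_norm x \<le> C * \<parallel>x\<parallel>"
    using C(2)[OF x] .
  also have "\<dots> \<le> C * (1 / (2 * C))"
    using g(2) C(1) by (intro mult_left_mono) (simp_all add: x_def)
  finally have "mult_norm x < 1"
    using C(1) by simp
  then obtain y where y: "y \<in> H" "(\<lambda>z. (one_disc z - x z) * y z) = one_disc"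
    using neumann_series[OF x] by blast
  show ?thesis
  proof (rule that[of "\<lambda>z. g z * y z"])
    show "(\<lambda>z. g z * y z) \<in> H"
      using g y by simp
    show "f z * (g z * y z) = 1" if "z \<in> disc" for z
      using fun_cong[OF y(2), of z] that by (simp add: x_def dres_def mult.assoc)
  qed
qed

lemma invertible_mult_iff:
  assumes f: "f \<in> H"
  shows "invertible_mult H f \<longleftrightarrow> (\<exists>\<psi>\<in>H. \<forall>z\<in>disc. f z * \<psi> z = 1)"
proof
  assume "invertible_mult H f"
  then obtain \<psi> where \<psi>: "\<psi> \<in> Mult H" "\<forall>z\<in>disc. f z * \<psi> z = 1"
    unfolding invertible_mult_def by blast
  then have "(\<lambda>z. \<psi> z * one_disc z) \<in> H"
    unfolding Mult_def by simp
  with \<psi>(2) show "\<exists>\<psi>\<in>H. \<forall>z\<in>disc. f z * \<psi> z = 1"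
    by (intro bexI[of _ "\<lambda>z. \<psi> z * one_disc z"]) (simp_all add: dres_def)
next
  assume "\<exists>\<psi>\<in>H. \<forall>z\<in>disc. f z * \<psi> z = 1"
  then obtain \<psi> where "\<psi> \<in> H" "\<forall>z\<in>disc. f z * \<psi> z = 1"
    by blast
  moreover have "f \<in> Mult H" "\<psi> \<in> Mult H"
    using f \<open>\<psi> \<in> H\<close> unfolding Mult_def by simp_all
  ultimately show "invertible_mult H f"
    unfolding invertible_mult_def by blast
qed

lemma cyclic_iff:
  assumes f: "f \<in> H"
  shows "cyclic H ip f \<longleftrightarrow> (\<exists>\<psi>\<in>H. \<forall>z\<in>disc. f z * \<psi> z = 1)"
proof
  assume "cyclic H ip f"
  then have "H \<subseteq> closed_ideal f"
    using closed_inv_subspace_closed_ideal[OF f] self_mem_closed_ideal[OF f]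
    unfolding cyclic_def by blast
  then have "one_disc \<in> closed_ideal f"
    by auto
  then show "\<exists>\<psi>\<in>H. \<forall>z\<in>disc. f z * \<psi> z = 1"
    using inverse_if_one_mem_closed_ideal[OF f] by metis
next
  assume "\<exists>\<psi>\<in>H. \<forall>z\<in>disc. f z * \<psi> z = 1"
  then obtain \<psi> where \<psi>: "\<psi> \<in> H" "\<forall>z\<in>disc. f z * \<psi> z = 1"
    by blast
  have f\<psi>: "(\<lambda>z. f z * \<psi> z) = one_disc"
    using \<psi>(2) vanishes_outside_disc[OF f] by (auto simp: fun_eq_iff dres_def)
  have "H \<subseteq> M" if M: "closed_inv_subspace H ip M" and fM: "f \<in> M" for M
  proof
    fix h
    assume h: "h \<in> H"
    have "one_disc \<in> M"
      using closed_inv_subspace_mult[OF M fM \<psi>(1)] f\<psi> by simp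
    then show "h \<in> M"
      using closed_inv_subspace_mult[OF M _ h] one_disc_mult[OF h] by metis
  qed
  moreover have "closed_inv_subspace H ip H"
    by (simp add: closed_inv_subspace_def hdiff_def Mz_def)
  ultimately show "cyclic H ip f"
    unfolding cyclic_def using f by blast
qed

lemma nonvanishing_extension_if_inverse:
  assumes f: "f \<in> H" and \<psi>: "\<psi> \<in> H" "\<And>z. z \<in> disc \<Longrightarrow> f z * \<psi> z = 1"
  shows "\<exists>g. continuous_on (cball 0 1) g \<and> (\<forall>z\<in>disc. g z = f z) \<and> (\<forall>z\<in>cball 0 1. g z \<noteq> 0)"
proof -
  obtain g where g: "continuous_on (cball 0 1) g" "\<And>z. z \<in> disc \<Longrightarrow> g z = f z"
    using continuous_extension_exists[OF f] by blast
  obtain h where h: "continuous_on (cball 0 1) h" "\<And>z. z \<in> disc \<Longrightarrow> h z = \<psi> z"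
    using continuous_extension_exists[OF \<psi>(1)] by blast
  have "norm (g l * h l - 1) \<le> 0" if "l \<in> cball 0 1" for l
  proof (rule continuous_on_closure_norm_le[of disc "\<lambda>z. g z * h z - 1"])
    show "continuous_on (closure disc) (\<lambda>z. g z * h z - 1)"
      using g(1) h(1) by (simp add: closure_disc continuous_intros)
    show "\<forall>z\<in>disc. norm (g z * h z - 1) \<le> 0"
      using g(2) h(2) \<psi>(2) by simp
  qed (use that in \<open>simp add: closure_disc\<close>)
  then have "g l \<noteq> 0" if "l \<in> cball 0 1" for l
    using that by fastforce
  with g show ?thesis
    by blast
qed

end

context property_A_algebra
begin

definition resolvent_mod :: "(complex \<Rightarrow> complex) set \<Rightarrow> complex \<Rightarrow> (complex \<Rightarrow> complex) \<Rightarrow> bool" where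
  "resolvent_mod J l g \<longleftrightarrow> g \<in> H \<and> (\<lambda>z. z * g z - l * g z - one_disc z) \<in> J"

context
  fixes J
  assumes J: "closed_inv_subspace H ip J"
begin

lemma ideal_subset: "J \<subseteq> H"
  using J closed_subspace_subset by (auto simp: closed_inv_subspace_iff)

lemma ideal_diff: "f \<in> J \<Longrightarrow> g \<in> J \<Longrightarrow> (\<lambda>z. f z - g z) \<in> J"
  using J closed_subspace_add[of J f "\<lambda>z. (-1) * g z"] closed_subspace_scale[of J g "-1"]
  by (simp add: closed_inv_subspace_iff)

lemma ideal_scale: "f \<in> J \<Longrightarrow> (\<lambda>z. c * f z) \<in> J"
  using J closed_subspace_scale by (auto simp: closed_inv_subspace_iff)

lemma ideal_mult_left: "f \<in> J \<Longrightarrow> g \<in> H \<Longrightarrow> (\<lambda>z. g z * f z) \<in> J"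
  using closed_inv_subspace_mult[OF J, of f g] by (simp add: mult.commute)

lemma resolvent_mod_diff_mem:
  assumes g1: "resolvent_mod J l g1" and g2: "resolvent_mod J l g2"
  shows "(\<lambda>z. g1 z - g2 z) \<in> J"
proof -
  define d where "d = (\<lambda>z. g1 z - g2 z)"
  define e1 where "e1 = (\<lambda>z. z * g1 z - l * g1 z - one_disc z)"
  have H: "g1 \<in> H" "g2 \<in> H" "d \<in> H"
    using g1 g2 by (simp_all add: resolvent_mod_def d_def)
  have e1: "e1 \<in> J"
    using g1 by (simp add: resolvent_mod_def e1_def)
  have "(\<lambda>z. (z * g1 z - l * g1 z - one_disc z) - (z * g2 z - l * g2 z - one_disc z)) \<in> J"
    using g1 g2 by (intro ideal_diff[of "\<lambda>z. z * g1 z - l * g1 z - one_disc z"]) (simp_all add: resolvent_mod_def)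
  then have "(\<lambda>z. z * d z - l * d z) \<in> J"
    by (simp add: d_def algebra_simps)
  then have "(\<lambda>z. g1 z * (z * d z - l * d z) - d z * e1 z) \<in> J"
    by (rule ideal_diff[OF ideal_mult_left[OF _ H(1)] ideal_mult_left[OF e1 H(3)]])
  moreover have "(\<lambda>z. g1 z * (z * d z - l * d z) - d z * e1 z) = d"
    using fun_cong[OF mult_one_disc[OF H(3)]] by (auto simp: fun_eq_iff e1_def algebra_simps)
  ultimately show ?thesis
    by (simp add: d_def)
qed

lemma ip_resolvent_mod_eq:
  assumes g1: "resolvent_mod J l g1" and g2: "resolvent_mod J l g2"
    and u: "u \<in> H" and v: "v \<in> H" and orth: "\<And>x. x \<in> J \<Longrightarrow> ip x v = 0"
  shows "ip (\<lambda>z. u z * g1 z) v = ip (\<lambda>z. u z * g2 z) v"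
proof -
  have H: "g1 \<in> H" "g2 \<in> H"
    using g1 g2 by (simp_all add: resolvent_mod_def)
  have "ip (\<lambda>z. u z * g1 z) v - ip (\<lambda>z. u z * g2 z) v = ip (\<lambda>z. u z * (g1 z - g2 z)) v"
    using ip_diff_left[of "\<lambda>z. u z * g1 z" "\<lambda>z. u z * g2 z" v] u v H by (simp add: algebra_simps)
  also have "\<dots> = 0"
    using orth ideal_mult_left[OF resolvent_mod_diff_mem[OF g1 g2] u] by simp
  finally show ?thesis
    by simp
qed

lemma resolvent_mod_shift:
  assumes g0: "resolvent_mod J l0 g0" and r: "r \<in> H"
    and inverse: "(\<lambda>z. (one_disc z - (\<mu> - l0) * g0 z) * r z) = one_disc"
  shows "resolvent_mod J \<mu> (\<lambda>z. g0 z * r z)"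
proof -
  have g0H: "g0 \<in> H"
    using g0 by (simp add: resolvent_mod_def)
  have "(\<lambda>z. r z * (z * g0 z - l0 * g0 z - one_disc z)) \<in> J"
    using g0 r by (intro ideal_mult_left) (simp_all add: resolvent_mod_def)
  moreover have "(\<lambda>z. r z * (z * g0 z - l0 * g0 z - one_disc z)) =
      (\<lambda>z. z * (g0 z * r z) - \<mu> * (g0 z * r z) - one_disc z)"
    using fun_cong[OF inverse] by (auto simp: fun_eq_iff algebra_simps)
  ultimately show ?thesis
    using g0H r by (simp add: resolvent_mod_def)
qed

lemma resolvent_mod_near:
  assumes g0: "resolvent_mod J l0 g0" and near: "cmod (\<mu> - l0) * mult_norm g0 \<le> 1 / 2"
  obtains r where "r \<in> H" "\<parallel>r\<parallel> \<le> 2 * \<parallel>one_disc\<parallel>"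
    "(\<lambda>z. (one_disc z - (\<mu> - l0) * g0 z) * r z) = one_disc"
    "resolvent_mod J \<mu> (\<lambda>z. g0 z * r z)"
proof -
  define x where "x = (\<lambda>z. (\<mu> - l0) * g0 z)"
  have x: "x \<in> H"
    using g0 by (simp add: resolvent_mod_def x_def)
  have small: "mult_norm x \<le> 1 / 2"
    using mult_norm_scale_le[of g0 "\<mu> - l0"] g0 near by (simp add: resolvent_mod_def x_def)
  then obtain r where r: "r \<in> H" "(\<lambda>z. (one_disc z - x z) * r z) = one_disc"
    "\<parallel>r\<parallel> \<le> 2 * \<parallel>one_disc\<parallel>"
    using neumann_series_half[OF x] by blast
  with resolvent_mod_shift[OF g0 r(1)] that show ?thesis
    by (simp add: x_def)
qed

lemma resolvent_mod_far:
  assumes large: "cmod \<mu> \<ge> 2 * mult_norm (\<lambda>z. z * one_disc z) + 1"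
  obtains g where "resolvent_mod J \<mu> g" "\<parallel>g\<parallel> \<le> 2 * \<parallel>one_disc\<parallel> / cmod \<mu>"
proof -
  have zH: "(\<lambda>z. z * one_disc z) \<in> H"
    by simp
  have \<mu>: "cmod \<mu> > 0"
    using large mult_norm_nonneg[OF zH] by linarith
  define x where "x = (\<lambda>z. (1 / \<mu>) * (z * one_disc z))"
  have x: "x \<in> H"
    unfolding x_def by (rule scale_mem[OF zH])
  have "mult_norm x \<le> cmod (1 / \<mu>) * mult_norm (\<lambda>z. z * one_disc z)"
    unfolding x_def by (rule mult_norm_scale_le[OF zH])
  also have "\<dots> \<le> 1 / 2"
    using large \<mu> by (simp add: norm_divide field_simps)
  finally obtain r where r: "r \<in> H" "(\<lambda>z. (one_disc z - x z) * r z) = one_disc"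
    "\<parallel>r\<parallel> \<le> 2 * \<parallel>one_disc\<parallel>"
    using neumann_series_half[OF x] by blast
  define g where "g = (\<lambda>z. (- 1 / \<mu>) * r z)"
  have "z * g z - \<mu> * g z - one_disc z = 0" for z
  proof (cases "z \<in> disc")
    case True
    then show ?thesis
      using fun_cong[OF r(2), of z] \<mu> by (simp add: g_def x_def dres_def field_simps)
  next
    case False
    then show ?thesis
      using vanishes_outside_disc[OF r(1) False] by (simp add: g_def dres_def)
  qed
  then have "(\<lambda>z. z * g z - \<mu> * g z - one_disc z) = (\<lambda>_. 0)"
    by (simp add: fun_eq_iff)
  moreover have "g \<in> H"
    unfolding g_def by (rule scale_mem[OF r(1)])
  ultimately have "resolvent_mod J \<mu> g"
    using J closed_subspace_zero by (simp add: resolvent_mod_def closed_inv_subspace_iff)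
  moreover have "\<parallel>g\<parallel> \<le> 2 * \<parallel>one_disc\<parallel> / cmod \<mu>"
    using r(3) hnorm_scale[OF r(1), of "- 1 / \<mu>"] \<mu> by (simp add: g_def norm_divide divide_right_mono)
  ultimately show ?thesis
    by (rule that)
qed

text \<open>Near a point l where the extension of f does not vanish, f is close in the
  multiplier norm to a polynomial p with p l \<noteq> 0; dividing p - p l by z - l and inverting
  f/(p l) by a Neumann series gives a resolvent modulo any closed ideal containing f.\<close>

lemma resolvent_mod_of_nonvanishing:
  assumes f: "f \<in> J" and g: "continuous_on (cball 0 1) g" "\<And>z. z \<in> disc \<Longrightarrow> g z = f z"
    and l: "l \<in> cball 0 1" and nz: "g l \<noteq> 0"
  obtains h where "resolvent_mod J l h"
proof -
  have fH: "f \<in> H"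
    using f ideal_subset by blast
  obtain C where C: "C > 0" "\<And>f. f \<in> H \<Longrightarrow> mult_norm f \<le> C * \<parallel>f\<parallel>"
    using mult_norm_le_hnorm by blast
  define a where "a = cmod (g l)"
  have a: "a > 0"
    using nz by (simp add: a_def)
  obtain p where p: "\<parallel>\<lambda>z. f z - dres (poly p) z\<parallel> < a / (4 * C)"
    using poly_approx[OF fH, of "a / (4 * C)"] a C(1) by auto
  define d where "d = (\<lambda>z. dres (poly p) z - f z)"
  have dH: "d \<in> H"
    using fH by (simp add: d_def)
  have "mult_norm d \<le> C * \<parallel>d\<parallel>"
    using C(2)[OF dH] .
  also have "\<dots> < C * (a / (4 * C))"
  proof (rule mult_strict_left_mono[OF _ C(1)])
    show "\<parallel>d\<parallel> < a / (4 * C)"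
      using p hnorm_diff_commute[OF fH dres_poly_mem] by (simp add: d_def)
  qed
  finally have d_small: "mult_norm d < a / 4"
    using C(1) by simp
  define \<beta> where "\<beta> = poly p l"
  have "cmod (poly p l - g l) \<le> mult_norm d"
  proof (rule continuous_on_closure_norm_le[of disc "\<lambda>z. poly p z - g z"])
    show "continuous_on (closure disc) (\<lambda>z. poly p z - g z)"
      using g(1) by (simp add: closure_disc continuous_intros)
    show "\<forall>z\<in>disc. cmod (poly p z - g z) \<le> mult_norm d"
      using norm_le_mult_norm[OF dH] g(2) by (simp add: d_def dres_def)
  qed (use l in \<open>simp add: closure_disc\<close>)
  then have "cmod (g l - poly p l) \<le> mult_norm d"
    by (simp add: norm_minus_commute)
  then have \<beta>: "cmod \<beta> > a / 2"
    using d_small norm_triangle_ineq2[of "g l" "poly p l"] a unfolding \<beta>_def a_def by linarith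
  define x where "x = (\<lambda>z. (1 / \<beta>) * d z)"
  have x: "x \<in> H"
    unfolding x_def by (rule scale_mem[OF dH])
  have "mult_norm x \<le> cmod (1 / \<beta>) * mult_norm d"
    unfolding x_def by (rule mult_norm_scale_le[OF dH])
  also have "\<dots> \<le> 1 / 2"
  proof -
    have "2 * mult_norm d \<le> cmod \<beta>" "cmod \<beta> > 0"
      using \<beta> d_small a by linarith+
    then show ?thesis
      by (simp add: norm_divide field_simps)
  qed
  finally obtain r where r: "r \<in> H" "(\<lambda>z. (one_disc z - x z) * r z) = one_disc"
    using neumann_series_half[OF x] by blast
  define q where "q = synthetic_div p l"
  define h where "h = (\<lambda>z. (- 1 / \<beta>) * (dres (poly q) z * r z))"
  have "z * h z - l * h z - one_disc z = (- 1 / \<beta>) * (f z * r z)" for z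
  proof (cases "z \<in> disc")
    case True
    have "poly p z = poly ([:-l, 1:] * synthetic_div p l + [:poly p l:]) z"
      by (simp only: synthetic_div_correct')
    also have "\<dots> = (z - l) * poly q z + \<beta>"
      by (simp add: q_def \<beta>_def algebra_simps)
    finally have "poly p z = (z - l) * poly q z + \<beta>" .
    moreover have "\<beta> \<noteq> 0"
      using \<beta> a by auto
    ultimately show ?thesis
      using fun_cong[OF r(2), of z] True
      by (simp add: h_def x_def d_def dres_def field_simps) algebra
  next
    case False
    then show ?thesis
      using vanishes_outside_disc[OF r(1) False] by (simp add: h_def dres_def)
  qed
  moreover have "(\<lambda>z. (- 1 / \<beta>) * (f z * r z)) \<in> J"
    using ideal_scale[OF closed_inv_subspace_mult[OF J f r(1)]] .
  moreover have "h \<in> H"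
    unfolding h_def using r(1) by (intro scale_mem mult_mem dres_poly_mem)
  ultimately have "resolvent_mod J l h"
    by (simp add: resolvent_mod_def)
  then show ?thesis
    by (rule that)
qed

lemma ip_resolvent_mod_shift:
  assumes g0: "g0 \<in> H" and r: "r \<in> H" and u: "u \<in> H" and v: "v \<in> H"
    and inverse: "(\<lambda>z. (one_disc z - (\<mu> - l0) * g0 z) * r z) = one_disc"
  shows "ip (\<lambda>z. u z * (g0 z * r z)) v =
    ip (\<lambda>z. u z * g0 z) v + (\<mu> - l0) * ip (\<lambda>z. u z * (g0 z * (g0 z * r z))) v"
proof -
  have "u z * (g0 z * r z) = u z * g0 z + (\<mu> - l0) * (u z * (g0 z * (g0 z * r z)))" for z
  proof (cases "z \<in> disc")
    case True
    then have "r z = 1 + (\<mu> - l0) * (g0 z * r z)"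
      using fun_cong[OF inverse, of z] by (simp add: dres_def algebra_simps)
    then show ?thesis
      by algebra
  next
    case False
    then show ?thesis
      using vanishes_outside_disc[OF u False] by simp
  qed
  then have "(\<lambda>z. u z * (g0 z * r z)) = (\<lambda>z. u z * g0 z + (\<mu> - l0) * (u z * (g0 z * (g0 z * r z))))"
    by (rule ext)
  then show ?thesis
    using g0 r u v by (simp add: ip_add_left ip_scale_left)
qed

lemma hnorm_inverse_minus_one_le:
  assumes g0: "g0 \<in> H" and r: "r \<in> H"
    and inverse: "(\<lambda>z. (one_disc z - c * g0 z) * r z) = one_disc"
  shows "\<parallel>\<lambda>z. r z - one_disc z\<parallel> \<le> cmod c * mult_norm g0 * \<parallel>r\<parallel>"
proof -
  have "(\<lambda>z. r z - one_disc z) = (\<lambda>z. c * (g0 z * r z))"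
    using fun_cong[OF inverse] fun_cong[OF one_disc_mult[OF r]] by (auto simp: fun_eq_iff algebra_simps)
  then have "\<parallel>\<lambda>z. r z - one_disc z\<parallel> = cmod c * \<parallel>\<lambda>z. g0 z * r z\<parallel>"
    using hnorm_scale[of "\<lambda>z. g0 z * r z" c] g0 r by simp
  also have "\<dots> \<le> cmod c * (mult_norm g0 * \<parallel>r\<parallel>)"
    using hnorm_mult_le[OF g0 r] by (simp add: mult_left_mono)
  finally show ?thesis
    by (simp add: mult.assoc)
qed

lemma resolvent_functional_has_derivative:
  assumes G: "\<And>l. resolvent_mod J l (G l)" and u: "u \<in> H" and v: "v \<in> H"
    and orth: "\<And>x. x \<in> J \<Longrightarrow> ip x v = 0"
  shows "((\<lambda>l. ip (\<lambda>z. u z * G l z) v) has_field_derivative ip (\<lambda>z. u z * (G l0 z * G l0 z)) v) (at l0)"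
proof -
  define g0 where "g0 = G l0"
  have g0: "resolvent_mod J l0 g0" and g0H: "g0 \<in> H"
    using G[of l0] by (simp_all add: g0_def resolvent_mod_def)
  define \<rho> where "\<rho> = 1 / (2 * mult_norm g0 + 1)"
  have \<rho>: "\<rho> > 0"
    using mult_norm_nonneg[OF g0H] by (simp add: \<rho>_def)
  have "\<forall>\<mu>. \<exists>r. cmod (\<mu> - l0) < \<rho> \<longrightarrow> r \<in> H \<and> \<parallel>r\<parallel> \<le> 2 * \<parallel>one_disc\<parallel> \<and>
      (\<lambda>z. (one_disc z - (\<mu> - l0) * g0 z) * r z) = one_disc \<and> resolvent_mod J \<mu> (\<lambda>z. g0 z * r z)"
  proof
    fix \<mu>
    show "\<exists>r. cmod (\<mu> - l0) < \<rho> \<longrightarrow> r \<in> H \<and> \<parallel>r\<parallel> \<le> 2 * \<parallel>one_disc\<parallel> \<and>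
      (\<lambda>z. (one_disc z - (\<mu> - l0) * g0 z) * r z) = one_disc \<and> resolvent_mod J \<mu> (\<lambda>z. g0 z * r z)"
    proof (cases "cmod (\<mu> - l0) < \<rho>")
      case True
      have "cmod (\<mu> - l0) * (2 * mult_norm g0 + 1) < 1"
        using True mult_norm_nonneg[OF g0H] by (simp add: \<rho>_def field_simps)
      moreover have "2 * (cmod (\<mu> - l0) * mult_norm g0) \<le> cmod (\<mu> - l0) * (2 * mult_norm g0 + 1)"
        by (simp add: algebra_simps)
      ultimately have "cmod (\<mu> - l0) * mult_norm g0 \<le> 1 / 2"
        by linarith
      then show ?thesis
        by (rule resolvent_mod_near[OF g0]) blast
    qed simp
  qed
  then have "\<exists>R. \<forall>\<mu>. cmod (\<mu> - l0) < \<rho> \<longrightarrow> R \<mu> \<in> H \<and> \<parallel>R \<mu>\<parallel> \<le> 2 * \<parallel>one_disc\<parallel> \<and>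
      (\<lambda>z. (one_disc z - (\<mu> - l0) * g0 z) * R \<mu> z) = one_disc \<and> resolvent_mod J \<mu> (\<lambda>z. g0 z * R \<mu> z)"
    by (rule choice)
  then obtain R where "\<forall>\<mu>. cmod (\<mu> - l0) < \<rho> \<longrightarrow> R \<mu> \<in> H \<and> \<parallel>R \<mu>\<parallel> \<le> 2 * \<parallel>one_disc\<parallel> \<and>
      (\<lambda>z. (one_disc z - (\<mu> - l0) * g0 z) * R \<mu> z) = one_disc \<and> resolvent_mod J \<mu> (\<lambda>z. g0 z * R \<mu> z)"
    ..
  then have R: "\<And>\<mu>. cmod (\<mu> - l0) < \<rho> \<Longrightarrow> R \<mu> \<in> H \<and> \<parallel>R \<mu>\<parallel> \<le> 2 * \<parallel>one_disc\<parallel> \<and>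
      (\<lambda>z. (one_disc z - (\<mu> - l0) * g0 z) * R \<mu> z) = one_disc \<and> resolvent_mod J \<mu> (\<lambda>z. g0 z * R \<mu> z)"
    by blast
  define w where "w = (\<lambda>z. u z * (g0 z * g0 z))"
  have wH: "w \<in> H"
    using u g0H by (simp add: w_def)
  have w_one: "w z * one_disc z = w z" for z
    using vanishes_outside_disc[OF wH, of z] by (cases "z \<in> disc") (simp_all add: dres_def)
  define K where "K = mult_norm w * \<parallel>v\<parallel> * (mult_norm g0 * (2 * \<parallel>one_disc\<parallel>))"
  have quotient: "(ip (\<lambda>z. u z * G \<mu> z) v - ip (\<lambda>z. u z * G l0 z) v) / (\<mu> - l0) = ip (\<lambda>z. w z * R \<mu> z) v"
    if "cmod (\<mu> - l0) < \<rho>" "\<mu> \<noteq> l0" for \<mu>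
  proof -
    have "ip (\<lambda>z. u z * G \<mu> z) v = ip (\<lambda>z. u z * (g0 z * R \<mu> z)) v"
      using ip_resolvent_mod_eq[OF G _ u v orth] R[OF that(1)] by blast
    also have "\<dots> = ip (\<lambda>z. u z * G l0 z) v + (\<mu> - l0) * ip (\<lambda>z. w z * R \<mu> z) v"
      using ip_resolvent_mod_shift[OF g0H _ u v, of "R \<mu>" \<mu> l0] R[OF that(1)]
      by (simp add: g0_def w_def mult.assoc)
    finally show ?thesis
      using that(2) by simp
  qed
  have close: "cmod (ip (\<lambda>z. w z * R \<mu> z) v - ip w v) \<le> K * cmod (\<mu> - l0)"
    if "cmod (\<mu> - l0) < \<rho>" for \<mu>
  proof -
    have RH: "R \<mu> \<in> H" and Rn: "\<parallel>R \<mu>\<parallel> \<le> 2 * \<parallel>one_disc\<parallel>"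
      using R[OF that] by blast+
    have "ip (\<lambda>z. w z * R \<mu> z) v - ip w v = ip (\<lambda>z. w z * (R \<mu> z - one_disc z)) v"
      using ip_diff_left[of "\<lambda>z. w z * R \<mu> z" w v] wH RH v
      by (simp add: right_diff_distrib w_one)
    also have "cmod \<dots> \<le> \<parallel>\<lambda>z. w z * (R \<mu> z - one_disc z)\<parallel> * \<parallel>v\<parallel>"
      using Cauchy_Schwarz wH RH v by simp
    also have "\<dots> \<le> mult_norm w * \<parallel>\<lambda>z. R \<mu> z - one_disc z\<parallel> * \<parallel>v\<parallel>"
      using hnorm_mult_le[OF wH, of "\<lambda>z. R \<mu> z - one_disc z"] RH v by (simp add: mult_right_mono)
    also have "\<dots> \<le> mult_norm w * (cmod (\<mu> - l0) * mult_norm g0 * (2 * \<parallel>one_disc\<parallel>)) * \<parallel>v\<parallel>"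
    proof (intro mult_right_mono mult_left_mono)
      have "\<parallel>\<lambda>z. R \<mu> z - one_disc z\<parallel> \<le> cmod (\<mu> - l0) * mult_norm g0 * \<parallel>R \<mu>\<parallel>"
        using hnorm_inverse_minus_one_le[OF g0H RH] R[OF that] by blast
      also have "\<dots> \<le> cmod (\<mu> - l0) * mult_norm g0 * (2 * \<parallel>one_disc\<parallel>)"
        using Rn mult_norm_nonneg[OF g0H] by (intro mult_left_mono) simp_all
      finally show "\<parallel>\<lambda>z. R \<mu> z - one_disc z\<parallel> \<le> cmod (\<mu> - l0) * mult_norm g0 * (2 * \<parallel>one_disc\<parallel>)" .
    qed (use mult_norm_nonneg[OF wH] v in simp_all)
    also have "\<dots> = K * cmod (\<mu> - l0)"
      by (simp add: K_def algebra_simps)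
    finally show ?thesis .
  qed
  have near: "\<forall>\<^sub>F \<mu> in at l0. cmod (\<mu> - l0) < \<rho>"
    using \<rho> unfolding eventually_at by (auto simp: dist_norm)
  have "((\<lambda>\<mu>. K * cmod (\<mu> - l0)) \<longlongrightarrow> K * cmod (l0 - l0)) (at l0)"
    by (intro tendsto_intros)
  then have "((\<lambda>\<mu>. ip (\<lambda>z. w z * R \<mu> z) v - ip w v) \<longlongrightarrow> 0) (at l0)"
    using Lim_null_comparison[OF eventually_mono[OF near close]] by simp
  then have lim: "((\<lambda>\<mu>. ip (\<lambda>z. w z * R \<mu> z) v) \<longlongrightarrow> ip w v) (at l0)"
    by (rule LIM_zero_cancel)
  have "\<forall>\<^sub>F \<mu> in at l0. ip (\<lambda>z. w z * R \<mu> z) v =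
      (ip (\<lambda>z. u z * G \<mu> z) v - ip (\<lambda>z. u z * G l0 z) v) / (\<mu> - l0)"
    unfolding eventually_at using \<rho> quotient by (intro exI[of _ \<rho>]) (auto simp: dist_norm)
  from Lim_transform_eventually[OF lim this] show ?thesis
    unfolding has_field_derivative_iff by (simp add: w_def g0_def)
qed

lemma resolvent_functional_tendsto_0:
  assumes G: "\<And>l. resolvent_mod J l (G l)" and u: "u \<in> H" and v: "v \<in> H"
    and orth: "\<And>x. x \<in> J \<Longrightarrow> ip x v = 0"
  shows "((\<lambda>l. ip (\<lambda>z. u z * G l z) v) \<longlongrightarrow> 0) at_infinity"
proof (rule Lim_null_comparison)
  define K where "K = mult_norm u * \<parallel>v\<parallel> * (2 * \<parallel>one_disc\<parallel>)"
  have "cmod (ip (\<lambda>z. u z * G \<mu> z) v) \<le> K * norm (inverse \<mu>)"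
    if large: "2 * mult_norm (\<lambda>z. z * one_disc z) + 1 \<le> norm \<mu>" for \<mu>
  proof -
    obtain g where g: "resolvent_mod J \<mu> g" "\<parallel>g\<parallel> \<le> 2 * \<parallel>one_disc\<parallel> / cmod \<mu>"
      using resolvent_mod_far[OF large] by blast
    have gH: "g \<in> H"
      using g(1) by (simp add: resolvent_mod_def)
    have "ip (\<lambda>z. u z * G \<mu> z) v = ip (\<lambda>z. u z * g z) v"
      by (rule ip_resolvent_mod_eq[OF G g(1) u v orth])
    also have "cmod \<dots> \<le> \<parallel>\<lambda>z. u z * g z\<parallel> * \<parallel>v\<parallel>"
      using Cauchy_Schwarz u gH v by simp
    also have "\<dots> \<le> mult_norm u * \<parallel>g\<parallel> * \<parallel>v\<parallel>"
      using hnorm_mult_le[OF u gH] v by (simp add: mult_right_mono)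
    also have "\<dots> \<le> mult_norm u * (2 * \<parallel>one_disc\<parallel> / cmod \<mu>) * \<parallel>v\<parallel>"
      using g(2) mult_norm_nonneg[OF u] v by (intro mult_right_mono mult_left_mono) simp_all
    also have "\<dots> = K * norm (inverse \<mu>)"
      by (simp add: K_def norm_inverse divide_inverse)
    finally show ?thesis .
  qed
  then show "\<forall>\<^sub>F \<mu> in at_infinity. norm (ip (\<lambda>z. u z * G \<mu> z) v) \<le> K * norm (inverse \<mu>)"
    unfolding eventually_at_infinity by blast
  show "((\<lambda>\<mu>::complex. K * norm (inverse \<mu>)) \<longlongrightarrow> 0) at_infinity"
    by (intro tendsto_mult_right_zero tendsto_norm_zero tendsto_inverse_0)
qed

text \<open>Liouville's theorem in the quotient by J: if z - l is invertible modulo J for every l,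
  then every functional vanishing on J vanishes on the constant one.\<close>

lemma ip_one_disc_eq_0_if_resolvents:
  assumes v: "v \<in> H" and orth: "\<And>x. x \<in> J \<Longrightarrow> ip x v = 0"
    and resolvents: "\<And>l. \<exists>g. resolvent_mod J l g"
  shows "ip one_disc v = 0"
proof -
  obtain G where G: "\<And>l. resolvent_mod J l (G l)"
    using resolvents by metis
  define u where "u = (\<lambda>z. z * one_disc z)"
  have u: "u \<in> H"
    by (simp add: u_def)
  have "(\<lambda>l. ip (\<lambda>z. u z * G l z) v) holomorphic_on UNIV"
    unfolding holomorphic_on_def field_differentiable_def
    using resolvent_functional_has_derivative[OF G u v orth] by blast
  then have zero: "ip (\<lambda>z. u z * G 0 z) v = 0"
    using Liouville_weak_0 resolvent_functional_tendsto_0[OF G u v orth] by blast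
  have G0: "G 0 \<in> H" "(\<lambda>z. z * G 0 z - 0 * G 0 z - one_disc z) \<in> J"
    using G[of 0] by (simp_all add: resolvent_mod_def)
  have "one_disc = (\<lambda>z. u z * G 0 z - (z * G 0 z - 0 * G 0 z - one_disc z))"
    using vanishes_outside_disc[OF G0(1)] by (auto simp: fun_eq_iff u_def dres_def)
  then have "ip one_disc v = ip (\<lambda>z. u z * G 0 z - (z * G 0 z - 0 * G 0 z - one_disc z)) v"
    by (rule arg_cong)
  also have "\<dots> = ip (\<lambda>z. u z * G 0 z) v - ip (\<lambda>z. z * G 0 z - 0 * G 0 z - one_disc z) v"
    using G0(2) ideal_subset by (intro ip_diff_left mult_mem u G0(1) v) blast
  finally show ?thesis
    using zero orth[OF G0(2)] by simp
qed

end

end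

context property_A_algebra
begin

lemma resolvent_mod_outside_spectrum:
  assumes J: "closed_inv_subspace H ip J" and l: "l \<notin> spectrum_op H ip Mz"
  obtains g where "resolvent_mod J l g"
proof -
  obtain S where S: "bounded_op_on H ip S" "\<And>f. f \<in> H \<Longrightarrow> (\<lambda>z. Mz (S f) z - l * S f z) = f"
    using l unfolding spectrum_op_def by blast
  have SH: "S one_disc \<in> H"
    using S(1) unfolding bounded_op_on_def by simp
  have "(\<lambda>z. z * S one_disc z - l * S one_disc z - one_disc z) = (\<lambda>_. 0)"
    using fun_cong[OF S(2)[OF one_disc_mem]] by (simp add: Mz_def fun_eq_iff)
  then have "resolvent_mod J l (S one_disc)"
    using SH J closed_subspace_zero by (simp add: resolvent_mod_def closed_inv_subspace_iff)
  then show ?thesis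
    by (rule that)
qed

lemma inverse_if_nonvanishing_extension:
  assumes spectrum: "spectrum_op H ip Mz \<subseteq> cball 0 1" and f: "f \<in> H"
    and g: "continuous_on (cball 0 1) g" "\<And>z. z \<in> disc \<Longrightarrow> g z = f z"
    and nonvanishing: "\<And>z. z \<in> cball 0 1 \<Longrightarrow> g z \<noteq> 0"
  obtains \<psi> where "\<psi> \<in> H" "\<And>z. z \<in> disc \<Longrightarrow> f z * \<psi> z = 1"
proof (rule inverse_if_one_mem_closed_ideal[OF f])
  let ?J = "closed_ideal f"
  have J: "closed_inv_subspace H ip ?J"
    by (rule closed_inv_subspace_closed_ideal[OF f])
  show "one_disc \<in> ?J"
  proof (rule ccontr)
    assume "one_disc \<notin> ?J"
    then obtain v where v: "v \<in> H" "\<And>x. x \<in> ?J \<Longrightarrow> ip x v = 0" "ip one_disc v \<noteq> 0"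
      using orthogonal_vector_exists[of ?J one_disc] J by (auto simp: closed_inv_subspace_iff)
    have "\<exists>h. resolvent_mod ?J l h" for l
    proof (cases "l \<in> cball 0 1")
      case True
      then show ?thesis
        using resolvent_mod_of_nonvanishing[OF J self_mem_closed_ideal[OF f] g True nonvanishing]
        by blast
    next
      case False
      then show ?thesis
        using resolvent_mod_outside_spectrum[OF J] spectrum by blast
    qed
    then show False
      using ip_one_disc_eq_0_if_resolvents[OF J v(1,2)] v(3) by blast
  qed
qed (use that in blast)

end

theorem theorem3p13:
  fixes H :: "(complex \<Rightarrow> complex) set"
    and ip :: "(complex \<Rightarrow> complex) \<Rightarrow> (complex \<Rightarrow> complex) \<Rightarrow> complex"
  assumes "property_A H ip"
    and "\<forall>f\<in>H. \<forall>g\<in>H. (\<lambda>z. f z * g z) \<in> H"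
    and "spectrum_op H ip Mz = cball 0 1"
  shows "(\<forall>f\<in>H. \<exists>g. continuous_on (cball 0 1) g \<and> (\<forall>z\<in>disc. g z = f z))
    \<and> (\<forall>M. closed_inv_subspace H ip M \<longrightarrow> (\<forall>f\<in>M. \<forall>g\<in>H. (\<lambda>z. f z * g z) \<in> M))
    \<and> (\<forall>f\<in>H. (cyclic H ip f \<longleftrightarrow> invertible_mult H f)
             \<and> (invertible_mult H f \<longleftrightarrow>
                  (\<exists>g. continuous_on (cball 0 1) g \<and> (\<forall>z\<in>disc. g z = f z)
                       \<and> (\<forall>z\<in>cball 0 1. g z \<noteq> 0))))"
proof -
  interpret property_A_algebra H ip
    using assms(1,2) by unfold_locales
  have spectrum: "spectrum_op H ip Mz \<subseteq> cball 0 1"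
    using assms(3) by simp
  show ?thesis
  proof (intro conjI ballI allI impI)
    fix f
    assume "f \<in> H"
    then show "\<exists>g. continuous_on (cball 0 1) g \<and> (\<forall>z\<in>disc. g z = f z)"
      using continuous_extension_exists by metis
  next
    fix M f g
    assume "closed_inv_subspace H ip M" "f \<in> M" "g \<in> H"
    then show "(\<lambda>z. f z * g z) \<in> M"
      by (rule closed_inv_subspace_mult)
  next
    fix f
    assume "f \<in> H"
    then show "cyclic H ip f \<longleftrightarrow> invertible_mult H f"
      using cyclic_iff invertible_mult_iff by simp
  next
    fix f
    assume f: "f \<in> H"
    show "invertible_mult H f \<longleftrightarrow> (\<exists>g. continuous_on (cball 0 1) g \<and> (\<forall>z\<in>disc. g z = f z)
        \<and> (\<forall>z\<in>cball 0 1. g z \<noteq> 0))"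
      using invertible_mult_iff[OF f] nonvanishing_extension_if_inverse[OF f]
        inverse_if_nonvanishing_extension[OF spectrum f] by metis
  qed
qed

end
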